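(* Let $(M^n,c,v^m d\nu)$ be a smooth conformal measure space with characteristic constant $\mu$, $n\ge3$, $m\in\mathbb{R}\setminus\{-n,1-n,2-n\}$. For every $w\in\mathbb{R}$ and $\sigma\in\mathcal{E}[w]$, $$(n+2w-2)\mathbb{D}^W\sigma-(m+n+2w-2)\mathbb{D}\sigma=-mv^{-1}\Big\langle\mathbb{D}\sigma,\ J+\frac{\mu-(m-1)|J|^2}{2(m+n-1)v}X\Big\rangle X.$$ In particular, $\mathbb{D}^W$ is a well-defined operator $\mathcal{E}[w]\to\mathcal{T}[w-1]$ (independent of the choice of scale).
   Context: Conformal setting: $(M^n,c)$ a manifold with a conformal class of Riemannian metrics. $\mathcal{E}[w]$: conformal densities of weight $w$ (functions in a scale $g\in c$, multiplied by $e^{ws}$ under $g\mapsto e^{2s}g$). Standard tractor bundle $\mathbb{T}$: in a scale $\mathbb{T}\cong\mathbb{R}\oplus TM\oplus\mathbb{R}$, tractor $I$ with top $\sigma$, middle $\omega$, bottom $\rho$, transforming as $\sigma\mapsto e^{s}\sigma$, $\omega\mapsto e^{-s}(\omega+\sigma\nabla s)$, $\rho\mapsto e^{-s}(\rho-g(\nabla s,\omega)-\tfrac12|\nabla s|^2\sigma)$; $\mathcal{T}[w]$ denotes weight-$w$ tractor sections. Tractor metric $\langle I,I\rangle=2\sigma\rho+|\omega|_g^2$. $X\in\mathcal{T}[1]$: top and middle $0$, bottom $1$. Schouten $P=\frac1{n-2}(\mathrm{Ric}-\mathrm{J}g)$, $\mathrm{J}=\operatorname{tr}P$. Tractor-$D$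 $\mathbb{D}:\mathcal{E}[w]\to\mathcal{T}[w-1]$: top $w(n+2w-2)u$, middle $(n+2w-2)\nabla u$, bottom $-(\Delta u+w\mathrm{J}u)$ (scale-independent). SCMS: positive $v\in\mathcal{E}[1]$, $m\in\mathbb{R}$, fixed constant $\mu$; in a scale $v$ is a positive function. $\Delta_\phi u=\Delta u+mv^{-1}g(\nabla v,\nabla u)$, $R^m_\phi=R-2mv^{-1}\Delta v-m(m-1)v^{-2}|\nabla v|^2$, $\mathrm{J}^W=\frac{1}{2(m+n-1)}(R^m_\phi+m\mu v^{-2})$. $J=\frac1n\mathbb{D}v$. The $W$-tractor-$D$ operator is defined in each scale by: $\mathbb{D}^Wu$ has top $w(m+n+2w-2)u$, middle $(m+n+2w-2)\nabla u$, bottom $-(\Delta_\phi u+w\mathrm{J}^Wu)$. *)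

theory Defs
  imports "HOL-Analysis.Analysis"
begin

text \<open>Local (coordinate) model of a conformal manifold: an open set U in R^n with a
Riemannian metric g given by its component matrix field g x (a scale in the conformal class).\<close>

type_synonym 'n pt = "real ^ 'n"
type_synonym 'n tractor = "real \<times> (real ^ 'n) \<times> real"
  \<comment> \<open>(top, middle (a tangent vector), bottom) in a scale\<close>

definition pd :: "'n::finite \<Rightarrow> ('n pt \<Rightarrow> real) \<Rightarrow> 'n pt \<Rightarrow> real" where
  "pd i f x = frechet_derivative f (at x) (axis i 1)"

fun pds :: "'n::finite list \<Rightarrow> ('n pt \<Rightarrow> real) \<Rightarrow> 'n pt \<Rightarrow> real" where
  "pds [] f = f"
| "pds (i # is) f = pd i (pds is f)"

definition smooth_on :: "'n::finite pt set \<Rightarrow> ('n pt \<Rightarrow> real) \<Rightarrow> bool" where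
  "smooth_on U f \<longleftrightarrow> (\<forall>is. \<forall>x\<in>U. pds is f differentiable (at x))"

definition riem_metric_on :: "'n::finite pt set \<Rightarrow> ('n pt \<Rightarrow> real ^ 'n ^ 'n) \<Rightarrow> bool" where
  "riem_metric_on U g \<longleftrightarrow>
     (\<forall>i j. smooth_on U (\<lambda>y. g y $ i $ j)) \<and>
     (\<forall>x\<in>U. transpose (g x) = g x \<and> (\<forall>\<xi>. \<xi> \<noteq> 0 \<longrightarrow> \<xi> \<bullet> (g x *v \<xi>) > 0))"

definition ginv :: "('n::finite pt \<Rightarrow> real ^ 'n ^ 'n) \<Rightarrow> 'n pt \<Rightarrow> real ^ 'n ^ 'n" where
  "ginv g x = matrix_inv (g x)"

definition gdot :: "('n::finite pt \<Rightarrow> real ^ 'n ^ 'n) \<Rightarrow> 'n pt \<Rightarrow> real ^ 'n \<Rightarrow> real ^ 'n \<Rightarrow> real" where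
  "gdot g x a b = a \<bullet> (g x *v b)"

definition christoffel :: "('n::finite pt \<Rightarrow> real ^ 'n ^ 'n) \<Rightarrow> 'n \<Rightarrow> 'n \<Rightarrow> 'n \<Rightarrow> 'n pt \<Rightarrow> real" where
  "christoffel g k i j x = (1/2) * (\<Sum>l\<in>UNIV. ginv g x $ k $ l *
      (pd i (\<lambda>y. g y $ j $ l) x + pd j (\<lambda>y. g y $ i $ l) x - pd l (\<lambda>y. g y $ i $ j) x))"

definition ricci :: "('n::finite pt \<Rightarrow> real ^ 'n ^ 'n) \<Rightarrow> 'n \<Rightarrow> 'n \<Rightarrow> 'n pt \<Rightarrow> real" where
  "ricci g i j x = (\<Sum>k\<in>UNIV. pd k (christoffel g k i j) x - pd j (christoffel g k i k) x
      + (\<Sum>l\<in>UNIV. christoffel g k k l x * christoffel g l i j x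
                  - christoffel g k j l x * christoffel g l i k x))"

definition scal :: "('n::finite pt \<Rightarrow> real ^ 'n ^ 'n) \<Rightarrow> 'n pt \<Rightarrow> real" where
  "scal g x = (\<Sum>i\<in>UNIV. \<Sum>j\<in>UNIV. ginv g x $ i $ j * ricci g i j x)"

text \<open>J = tr P for the Schouten tensor P = (Ric - J g)/(n-2); solving gives J = R/(2(n-1)).\<close>
definition schJ :: "('n::finite pt \<Rightarrow> real ^ 'n ^ 'n) \<Rightarrow> 'n pt \<Rightarrow> real" where
  "schJ g x = scal g x / (2 * (real CARD('n) - 1))"

definition grad :: "('n::finite pt \<Rightarrow> real ^ 'n ^ 'n) \<Rightarrow> ('n pt \<Rightarrow> real) \<Rightarrow> 'n pt \<Rightarrow> real ^ 'n" where
  "grad g u x = ginv g x *v (\<chi> i. pd i u x)"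

definition lap :: "('n::finite pt \<Rightarrow> real ^ 'n ^ 'n) \<Rightarrow> ('n pt \<Rightarrow> real) \<Rightarrow> 'n pt \<Rightarrow> real" where
  "lap g u x = (\<Sum>i\<in>UNIV. \<Sum>j\<in>UNIV. ginv g x $ i $ j *
      (pd i (pd j u) x - (\<Sum>k\<in>UNIV. christoffel g k i j x * pd k u x)))"

definition tmetric :: "('n::finite pt \<Rightarrow> real ^ 'n ^ 'n) \<Rightarrow> 'n pt \<Rightarrow> 'n tractor \<Rightarrow> 'n tractor \<Rightarrow> real" where
  "tmetric g x I I' = (case I of (s, om, r) \<Rightarrow> case I' of (s', om', r') \<Rightarrow>
      s * r' + r * s' + gdot g x om om')"

definition tX :: "'n::finite tractor" where
  "tX = (0, 0, 1)"

text \<open>Tractor-D operator E[w] -> T[w-1], in the scale g.\<close>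
definition tD :: "('n::finite pt \<Rightarrow> real ^ 'n ^ 'n) \<Rightarrow> real \<Rightarrow> ('n pt \<Rightarrow> real) \<Rightarrow> 'n pt \<Rightarrow> 'n tractor" where
  "tD g w u x = (let n = real CARD('n) in
     (w * (n + 2*w - 2) * u x, (n + 2*w - 2) *\<^sub>R grad g u x, - (lap g u x + w * schJ g x * u x)))"

text \<open>SMMS quantities (parameters m, mu, and the density v, represented by a positive function in the scale).\<close>
definition wlap :: "('n::finite pt \<Rightarrow> real ^ 'n ^ 'n) \<Rightarrow> real \<Rightarrow> ('n pt \<Rightarrow> real) \<Rightarrow> ('n pt \<Rightarrow> real) \<Rightarrow> 'n pt \<Rightarrow> real" where
  "wlap g m v u x = lap g u x + m / v x * gdot g x (grad g v x) (grad g u x)"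

definition Rmphi :: "('n::finite pt \<Rightarrow> real ^ 'n ^ 'n) \<Rightarrow> real \<Rightarrow> ('n pt \<Rightarrow> real) \<Rightarrow> 'n pt \<Rightarrow> real" where
  "Rmphi g m v x = scal g x - 2 * m / v x * lap g v x
     - m * (m - 1) / (v x)\<^sup>2 * gdot g x (grad g v x) (grad g v x)"

definition JW :: "('n::finite pt \<Rightarrow> real ^ 'n ^ 'n) \<Rightarrow> real \<Rightarrow> real \<Rightarrow> ('n pt \<Rightarrow> real) \<Rightarrow> 'n pt \<Rightarrow> real" where
  "JW g m mu v x = (Rmphi g m v x + m * mu / (v x)\<^sup>2) / (2 * (m + real CARD('n) - 1))"

definition tDW :: "('n::finite pt \<Rightarrow> real ^ 'n ^ 'n) \<Rightarrow> real \<Rightarrow> real \<Rightarrow> ('n pt \<Rightarrow> real) \<Rightarrow> real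
                    \<Rightarrow> ('n pt \<Rightarrow> real) \<Rightarrow> 'n pt \<Rightarrow> 'n tractor" where
  "tDW g m mu v w u x = (let n = real CARD('n) in
     (w * (m + n + 2*w - 2) * u x, (m + n + 2*w - 2) *\<^sub>R grad g u x,
      - (wlap g m v u x + w * JW g m mu v x * u x)))"

definition tJ :: "('n::finite pt \<Rightarrow> real ^ 'n ^ 'n) \<Rightarrow> ('n pt \<Rightarrow> real) \<Rightarrow> 'n pt \<Rightarrow> 'n tractor" where
  "tJ g v x = (1 / real CARD('n)) *\<^sub>R tD g 1 v x"

text \<open>Change of scale g \<mapsto> e^(2s) g for a weight-k tractor, expressed in the old scale g.\<close>
definition tractor_rescale :: "('n::finite pt \<Rightarrow> real ^ 'n ^ 'n) \<Rightarrow> real \<Rightarrow> ('n pt \<Rightarrow> real) \<Rightarrow> 'n pt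
                               \<Rightarrow> 'n tractor \<Rightarrow> 'n tractor" where
  "tractor_rescale g k s x I = (case I of (sg, om, r) \<Rightarrow>
     exp (k * s x) *\<^sub>R
     (exp (s x) * sg,
      exp (- s x) *\<^sub>R (om + sg *\<^sub>R grad g s x),
      exp (- s x) * (r - gdot g x (grad g s x) om - (1/2) * gdot g x (grad g s x) (grad g s x) * sg)))"

end

theory Submission
  imports Defs
begin

text \<open>In a fixed scale the two operators have the same shape: after multiplying by \<open>n + 2w - 2\<close> and
  \<open>m + n + 2w - 2\<close> respectively their top and middle slots agree, and their bottom slots differ by
  \<open>m v^-1 \<langle>\<nabla>v, \<nabla>\<sigma>\<rangle>\<close> and \<open>w (J^W - J) \<sigma>\<close>. Since \<open>R = 2(n - 1) J\<close>, expanding the tractor inner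
  product on the right with \<open>J = (1/n) \<bbbD>v\<close> reproduces exactly these terms.

  Scale independence is the classical coordinate computation. Under \<open>g \<mapsto> e^(2s) g\<close> the Christoffel
  symbols change by \<open>\<delta>^k_i s_j + \<delta>^k_j s_i - g_ij \<nabla>^k s\<close>, which gives
  \<open>\<Delta>f \<mapsto> e^(-2s) (\<Delta>f + (n - 2) \<langle>\<nabla>s, \<nabla>f\<rangle>)\<close> and
  \<open>R \<mapsto> e^(-2s) (R - 2(n - 1) \<Delta>s - (n - 1)(n - 2) |\<nabla>s|^2)\<close>. Substituting these laws, together with
  \<open>v \<mapsto> e^s v\<close> and \<open>\<sigma> \<mapsto> e^(ws) \<sigma>\<close>, into the definition of \<open>\<bbbD>^W\<close> yields the tractor
  transformation law slot by slot.\<close>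

section \<open>Partial derivatives\<close>

lemma differentiable_has_frechet_derivative:
  "f differentiable (at x) \<Longrightarrow> (f has_derivative frechet_derivative f (at x)) (at x)"
  by (rule frechet_derivative_works[THEN iffD1])

lemma pd_eq_derivative: "(f has_derivative f') (at x) \<Longrightarrow> pd i f x = f' (axis i 1)"
  unfolding pd_def by (metis frechet_derivative_at)

lemma pd_add:
  assumes "f differentiable (at x)" "g differentiable (at x)"
  shows "pd i (\<lambda>y. f y + g y) x = pd i f x + pd i g x"
  using pd_eq_derivative[OF has_derivative_add[OF assms[THEN differentiable_has_frechet_derivative]]]
  by (simp add: pd_def)

lemma pd_diff:
  assumes "f differentiable (at x)" "g differentiable (at x)"
  shows "pd i (\<lambda>y. f y - g y) x = pd i f x - pd i g x"
  using pd_eq_derivative[OF has_derivative_diff[OF assms[THEN differentiable_has_frechet_derivative]]]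
  by (simp add: pd_def)

lemma pd_mult:
  assumes "f differentiable (at x)" "g differentiable (at x)"
  shows "pd i (\<lambda>y. f y * g y) x = f x * pd i g x + pd i f x * g x"
  using pd_eq_derivative[OF has_derivative_mult[OF assms[THEN differentiable_has_frechet_derivative]]]
  by (simp add: pd_def)

lemma pd_const: "pd i (\<lambda>y. c) x = 0"
  using pd_eq_derivative[of "\<lambda>y. c" "\<lambda>h. 0"] by simp

lemma pd_cmult:
  assumes "f differentiable (at x)"
  shows "pd i (\<lambda>y. c * f y) x = c * pd i f x"
  using pd_mult[of "\<lambda>y. c" x f i] assms by (simp add: pd_const)

lemma pd_sum:
  assumes "finite A" "\<And>a. a \<in> A \<Longrightarrow> f a differentiable (at x)"
  shows "pd i (\<lambda>y. \<Sum>a\<in>A. f a y) x = (\<Sum>a\<in>A. pd i (f a) x)"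
proof -
  have "((\<lambda>y. \<Sum>a\<in>A. f a y) has_derivative (\<lambda>h. \<Sum>a\<in>A. frechet_derivative (f a) (at x) h)) (at x)"
    by (rule has_derivative_sum) (use assms differentiable_has_frechet_derivative in auto)
  from pd_eq_derivative[OF this] show ?thesis by (simp add: pd_def)
qed

lemma pd_exp:
  assumes "f differentiable (at x)"
  shows "pd i (\<lambda>y. exp (f y)) x = exp (f x) * pd i f x"
proof -
  have "((\<lambda>y. exp (f y)) has_derivative (\<lambda>h. exp (f x) * frechet_derivative f (at x) h)) (at x)"
    using has_derivative_compose[OF differentiable_has_frechet_derivative[OF assms]
        DERIV_exp[THEN has_field_derivative_imp_has_derivative]]
    by (simp add: o_def mult.commute)
  from pd_eq_derivative[OF this] show ?thesis by (simp add: pd_def)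
qed

lemma differentiable_exp_comp:
  fixes f :: "'a::real_normed_vector \<Rightarrow> real"
  assumes "f differentiable (at x)"
  shows "(\<lambda>y. exp (f y)) differentiable (at x)"
proof -
  have "exp differentiable (at (f x))"
    using DERIV_exp[of "f x", THEN has_field_derivative_imp_has_derivative]
    unfolding differentiable_def by blast
  then show ?thesis using differentiable_compose[of exp f x] assms by auto
qed

lemma pd_cong_open:
  assumes "open S" "x \<in> S" "\<And>y. y \<in> S \<Longrightarrow> f y = g y" "f differentiable (at x)"
  shows "pd i f x = pd i g x"
  using frechet_derivative_transform_within_open[OF assms(4,1,2,3)] by (simp add: pd_def)

lemma differentiable_cong_open:
  assumes "open S" "x \<in> S" "\<And>y. y \<in> S \<Longrightarrow> f y = g y" "f differentiable (at x)"
  shows "g differentiable (at x)"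
  using has_derivative_transform_within_open[OF differentiable_has_frechet_derivative[OF assms(4)] assms(1,2)]
    assms(3) by (auto simp: differentiable_def)

lemma differentiable_prod:
  fixes f :: "'i \<Rightarrow> 'a::real_normed_vector \<Rightarrow> real"
  assumes "finite A" "\<forall>a\<in>A. f a differentiable (at x)"
  shows "(\<lambda>y. \<Prod>a\<in>A. f a y) differentiable (at x)"
  using assms by (induction A rule: finite_induct) (auto intro!: differentiable_mult)

lemma differentiable_det:
  fixes M :: "'a::real_normed_vector \<Rightarrow> real^'n::finite^'n"
  assumes "\<And>i j. (\<lambda>y. M y $ i $ j) differentiable (at x)"
  shows "(\<lambda>y. det (M y)) differentiable (at x)"
  unfolding det_def
  by (intro differentiable_sum ballI differentiable_mult differentiable_const differentiable_prod
      finite_permutations finite_UNIV) (auto simp: assms)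

section \<open>Contraction identities for the conformal change of the Christoffel symbols\<close>

lemma sum3_innermost_out:
  "(\<Sum>i\<in>(UNIV::'a::finite set). \<Sum>j\<in>(UNIV::'b::finite set). \<Sum>k\<in>(UNIV::'c::finite set). F i j k)
     = (\<Sum>k\<in>UNIV. \<Sum>i\<in>UNIV. \<Sum>j\<in>UNIV. F i j k)"
  by (subst sum.swap) (rule sum.cong[OF refl], rule sum.swap)

lemma sum3_outermost_in:
  "(\<Sum>i\<in>(UNIV::'a::finite set). \<Sum>j\<in>(UNIV::'b::finite set). \<Sum>k\<in>(UNIV::'c::finite set). F i j k)
     = (\<Sum>j\<in>UNIV. \<Sum>k\<in>UNIV. \<Sum>i\<in>UNIV. F i j k)"
  by (subst sum.swap) (rule sum.cong[OF refl], rule sum.swap)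

lemma sum4_swap_pairs:
  "(\<Sum>i\<in>(UNIV::'a::finite set). \<Sum>j\<in>(UNIV::'b::finite set). \<Sum>k\<in>(UNIV::'c::finite set).
      \<Sum>l\<in>(UNIV::'d::finite set). F i j k l)
     = (\<Sum>k\<in>UNIV. \<Sum>l\<in>UNIV. \<Sum>i\<in>UNIV. \<Sum>j\<in>UNIV. F i j k l)"
proof -
  have "(\<Sum>i\<in>(UNIV::'a set). \<Sum>j\<in>(UNIV::'b set). \<Sum>k\<in>(UNIV::'c set). \<Sum>l\<in>(UNIV::'d set). F i j k l)
     = (\<Sum>i\<in>UNIV. \<Sum>k\<in>UNIV. \<Sum>l\<in>UNIV. \<Sum>j\<in>UNIV. F i j k l)"
    by (rule sum.cong[OF refl], rule sum3_outermost_in)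
  also have "\<dots> = (\<Sum>k\<in>UNIV. \<Sum>l\<in>UNIV. \<Sum>i\<in>UNIV. \<Sum>j\<in>UNIV. F i j k l)"
    by (rule sum3_outermost_in)
  finally show ?thesis .
qed

lemma sum4_outermost_in:
  "(\<Sum>i\<in>(UNIV::'a::finite set). \<Sum>j\<in>(UNIV::'b::finite set). \<Sum>k\<in>(UNIV::'c::finite set).
      \<Sum>l\<in>(UNIV::'d::finite set). F i j k l)
     = (\<Sum>j\<in>UNIV. \<Sum>k\<in>UNIV. \<Sum>l\<in>UNIV. \<Sum>i\<in>UNIV. F i j k l)"
  by (subst sum3_outermost_in) (rule sum.cong[OF refl], rule sum.cong[OF refl], rule sum.swap)

lemma if_zero_times [simp]: "(if c then a else 0) * b = (if c then a * b else (0::real))"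
  by simp

lemma sum_if_zero_const_cond [simp]:
  "(\<Sum>j\<in>A. if c then f j else (0::real)) = (if c then (\<Sum>j\<in>A. f j) else 0)"
  by simp

text \<open>\<open>G\<close> and \<open>Gi\<close> are a metric and its inverse at one point, \<open>ds\<close> the differential of the
  conformal factor there. Under \<open>g \<mapsto> e^(2s) g\<close> the Christoffel symbols change by
  \<open>shift k i j = \<delta>^k_i s_j + \<delta>^k_j s_i - g_ij s^k\<close>.\<close>

locale christoffel_shift =
  fixes Gi G :: "'n::finite \<Rightarrow> 'n \<Rightarrow> real" and ds :: "'n \<Rightarrow> real"
  assumes Gi_sym: "\<And>i j. Gi i j = Gi j i" and G_sym: "\<And>i j. G i j = G j i"
    and Gi_G: "\<And>k j. (\<Sum>l\<in>UNIV. Gi k l * G l j) = (if k = j then 1 else 0)"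
begin

definition up :: "'n \<Rightarrow> real" where "up k = (\<Sum>l\<in>UNIV. Gi k l * ds l)"

definition shift :: "'n \<Rightarrow> 'n \<Rightarrow> 'n \<Rightarrow> real" where
  "shift k i j = (if k = i then ds j else 0) + (if k = j then ds i else 0) - G i j * up k"

definition ctr :: "('n \<Rightarrow> 'n \<Rightarrow> 'n \<Rightarrow> real) \<Rightarrow> 'n \<Rightarrow> real" where
  "ctr Gm l = (\<Sum>k\<in>UNIV. Gm k k l)"

definition gtr :: "('n \<Rightarrow> 'n \<Rightarrow> 'n \<Rightarrow> real) \<Rightarrow> 'n \<Rightarrow> real" where
  "gtr Gm l = (\<Sum>i\<in>UNIV. \<Sum>j\<in>UNIV. Gi i j * Gm l i j)"

lemma G_Gi: "(\<Sum>l\<in>UNIV. G k l * Gi l j) = (if k = j then 1 else 0)"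
  using Gi_G[of j k] by (auto simp: Gi_sym G_sym mult.commute)

lemma trace_Gi_G: "(\<Sum>i\<in>UNIV. \<Sum>j\<in>UNIV. Gi i j * G i j) = real CARD('n)"
  using Gi_G by (simp add: G_sym)

lemma G_up: "(\<Sum>k\<in>UNIV. G i k * up k) = ds i"
proof -
  have "(\<Sum>k\<in>UNIV. G i k * up k) = (\<Sum>k\<in>UNIV. \<Sum>l\<in>UNIV. G i k * Gi k l * ds l)"
    by (simp add: up_def sum_distrib_left mult.assoc)
  also have "\<dots> = (\<Sum>l\<in>UNIV. (\<Sum>k\<in>UNIV. G i k * Gi k l) * ds l)"
    by (subst sum.swap) (simp add: sum_distrib_right)
  also have "\<dots> = ds i" by (simp add: G_Gi)
  finally show ?thesis .
qed

lemma gtr_shift: "(\<Sum>i\<in>UNIV. \<Sum>j\<in>UNIV. Gi i j * shift l i j) = (2 - real CARD('n)) * up l"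
proof -
  have "(\<Sum>i\<in>UNIV. \<Sum>j\<in>UNIV. Gi i j * shift l i j) = (\<Sum>i\<in>UNIV. \<Sum>j\<in>UNIV.
      (if l = i then Gi i j * ds j else 0) + (if l = j then Gi i j * ds i else 0) - (Gi i j * G i j) * up l)"
    by (rule sum.cong[OF refl], rule sum.cong[OF refl]) (simp add: shift_def algebra_simps)
  also have "\<dots> = up l + (\<Sum>i\<in>UNIV. Gi i l * ds i) - real CARD('n) * up l"
    by (simp add: sum.distrib sum_subtractf sum_distrib_right[symmetric] trace_Gi_G up_def)
  also have "(\<Sum>i\<in>UNIV. Gi i l * ds i) = up l" by (simp add: up_def Gi_sym)
  finally show ?thesis by (simp add: algebra_simps)
qed

lemma ctr_shift: "(\<Sum>k\<in>UNIV. shift k k l) = real CARD('n) * ds l"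
proof -
  have "(\<Sum>k\<in>UNIV. shift k k l) = (\<Sum>k\<in>UNIV. ds l + (if k = l then ds k else 0) - G k l * up k)"
    by (rule sum.cong) (auto simp: shift_def)
  also have "\<dots> = real CARD('n) * ds l + ds l - ds l"
    using G_up[of l] by (simp add: sum.distrib sum_subtractf G_sym)
  finally show ?thesis by simp
qed

lemma contr_Gm_shift:
  "(\<Sum>i\<in>UNIV. \<Sum>j\<in>UNIV. Gi i j * (\<Sum>k\<in>UNIV. \<Sum>l\<in>UNIV. Gm k k l * shift l i j))
     = (2 - real CARD('n)) * (\<Sum>l\<in>UNIV. ctr Gm l * up l)"
proof -
  have "(\<Sum>i\<in>UNIV. \<Sum>j\<in>UNIV. Gi i j * (\<Sum>k\<in>UNIV. \<Sum>l\<in>UNIV. Gm k k l * shift l i j))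
     = (\<Sum>k\<in>UNIV. \<Sum>l\<in>UNIV. Gm k k l * (\<Sum>i\<in>UNIV. \<Sum>j\<in>UNIV. Gi i j * shift l i j))"
    unfolding sum_distrib_left by (rule trans[OF sum4_swap_pairs]) (simp add: mult_ac)
  also have "\<dots> = (2 - real CARD('n)) * (\<Sum>l\<in>UNIV. ctr Gm l * up l)"
    unfolding gtr_shift ctr_def
    by (subst sum.swap) (simp add: sum_distrib_left sum_distrib_right mult_ac)
  finally show ?thesis .
qed

lemma contr_shift_Gm:
  "(\<Sum>i\<in>UNIV. \<Sum>j\<in>UNIV. Gi i j * (\<Sum>k\<in>UNIV. \<Sum>l\<in>UNIV. shift k k l * Gm l i j))
     = real CARD('n) * (\<Sum>l\<in>UNIV. ds l * gtr Gm l)"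
proof -
  have "(\<Sum>i\<in>UNIV. \<Sum>j\<in>UNIV. Gi i j * (\<Sum>k\<in>UNIV. \<Sum>l\<in>UNIV. shift k k l * Gm l i j))
     = (\<Sum>k\<in>UNIV. \<Sum>l\<in>UNIV. shift k k l * (\<Sum>i\<in>UNIV. \<Sum>j\<in>UNIV. Gi i j * Gm l i j))"
    unfolding sum_distrib_left by (rule trans[OF sum4_swap_pairs]) (simp add: mult_ac)
  also have "\<dots> = (\<Sum>l\<in>UNIV. (\<Sum>k\<in>UNIV. shift k k l) * gtr Gm l)"
    unfolding gtr_def by (subst sum.swap) (simp add: sum_distrib_right)
  also have "\<dots> = real CARD('n) * (\<Sum>l\<in>UNIV. ds l * gtr Gm l)"
    unfolding ctr_shift by (simp add: sum_distrib_left mult_ac)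
  finally show ?thesis .
qed

lemma contr_shift_shift:
  "(\<Sum>i\<in>UNIV. \<Sum>j\<in>UNIV. Gi i j * (\<Sum>k\<in>UNIV. \<Sum>l\<in>UNIV. shift k k l * shift l i j))
     = real CARD('n) * (2 - real CARD('n)) * (\<Sum>l\<in>UNIV. ds l * up l)"
proof -
  have "(\<Sum>i\<in>UNIV. \<Sum>j\<in>UNIV. Gi i j * (\<Sum>k\<in>UNIV. \<Sum>l\<in>UNIV. shift k k l * shift l i j))
     = (\<Sum>k\<in>UNIV. \<Sum>l\<in>UNIV. shift k k l * (\<Sum>i\<in>UNIV. \<Sum>j\<in>UNIV. Gi i j * shift l i j))"
    unfolding sum_distrib_left by (rule trans[OF sum4_swap_pairs]) (simp add: mult_ac)
  also have "\<dots> = (\<Sum>l\<in>UNIV. (\<Sum>k\<in>UNIV. shift k k l) * ((2 - real CARD('n)) * up l))"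
    unfolding gtr_shift by (subst sum.swap) (simp add: sum_distrib_right)
  also have "\<dots> = real CARD('n) * (2 - real CARD('n)) * (\<Sum>l\<in>UNIV. ds l * up l)"
    unfolding ctr_shift by (simp add: sum_distrib_left mult_ac)
  finally show ?thesis .
qed

lemma cross_shift_shift:
  "(\<Sum>k\<in>UNIV. \<Sum>l\<in>UNIV. shift k j l * shift l i k)
     = (real CARD('n) + 2) * ds i * ds j - 2 * G i j * (\<Sum>l\<in>UNIV. ds l * up l)"
proof -
  have up_up: "(\<Sum>k\<in>UNIV. \<Sum>l\<in>UNIV. G j l * up k * (G i k * up l)) = ds i * ds j"
  proof -
    have "(\<Sum>k\<in>UNIV. \<Sum>l\<in>UNIV. G j l * up k * (G i k * up l))
        = (\<Sum>k\<in>UNIV. G i k * up k * (\<Sum>l\<in>UNIV. G j l * up l))"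
      by (simp add: sum_distrib_left mult_ac)
    also have "\<dots> = ds i * ds j" by (simp add: sum_distrib_right[symmetric] G_up)
    finally show ?thesis .
  qed
  have "(\<Sum>k\<in>UNIV. \<Sum>l\<in>UNIV. shift k j l * shift l i k) = (\<Sum>k\<in>UNIV. \<Sum>l\<in>UNIV.
      (if k = j then (if l = i then ds l * ds k else 0) else 0)
    + (if k = j then (if l = k then ds l * ds i else 0) else 0)
    - (if k = j then ds l * (G i k * up l) else 0)
    + (if l = i then (if k = l then ds j * ds k else 0) else 0)
    + (if k = l then ds j * ds i else 0) - (if k = l then ds j * (G i k * up l) else 0)
    - (if l = i then G j l * up k * ds k else 0) - (if l = k then G j l * up k * ds i else 0)
    + G j l * up k * (G i k * up l))"
    by (rule sum.cong[OF refl], rule sum.cong[OF refl]) (auto simp: shift_def algebra_simps)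
  also have "\<dots> = ds i * ds j + ds j * ds i - G i j * (\<Sum>l\<in>UNIV. ds l * up l)
      + ds j * ds i + real CARD('n) * (ds j * ds i) - ds j * (\<Sum>k\<in>UNIV. G i k * up k)
      - G j i * (\<Sum>k\<in>UNIV. up k * ds k) - (\<Sum>k\<in>UNIV. G j k * up k) * ds i + ds i * ds j"
    by (simp only: sum.distrib sum_subtractf up_up)
       (simp add: sum_distrib_left sum_distrib_right mult_ac)
  also have "\<dots> = (real CARD('n) + 2) * ds i * ds j - 2 * G i j * (\<Sum>l\<in>UNIV. ds l * up l)"
    by (simp add: G_up G_sym[of j i] mult.commute[of "up _"] algebra_simps)
  finally show ?thesis .
qed

lemma contr_cross_shift_shift:
  "(\<Sum>i\<in>UNIV. \<Sum>j\<in>UNIV. Gi i j * (\<Sum>k\<in>UNIV. \<Sum>l\<in>UNIV. shift k j l * shift l i k))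
     = (2 - real CARD('n)) * (\<Sum>l\<in>UNIV. ds l * up l)"
proof -
  define S where "S = (\<Sum>l\<in>UNIV. ds l * up l)"
  have "(\<Sum>i\<in>UNIV. \<Sum>j\<in>UNIV. Gi i j * (\<Sum>k\<in>UNIV. \<Sum>l\<in>UNIV. shift k j l * shift l i k))
     = (\<Sum>i\<in>UNIV. \<Sum>j\<in>UNIV. (real CARD('n) + 2) * (ds i * (Gi i j * ds j)) - 2 * S * (Gi i j * G i j))"
    unfolding cross_shift_shift S_def[symmetric]
    by (rule sum.cong[OF refl], rule sum.cong[OF refl]) (simp add: algebra_simps)
  also have "\<dots> = (real CARD('n) + 2) * S - 2 * S * real CARD('n)"
    by (simp add: sum_subtractf sum_distrib_left[symmetric] trace_Gi_G up_def S_def)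
  finally show ?thesis unfolding S_def by (simp add: algebra_simps)
qed

lemma contr_cross_Gm_shift:
  assumes Gm_sym: "\<And>k i j. Gm k i j = Gm k j i"
  shows "(\<Sum>i\<in>UNIV. \<Sum>j\<in>UNIV. Gi i j * (\<Sum>k\<in>UNIV. \<Sum>l\<in>UNIV. Gm k j l * shift l i k))
     = (\<Sum>l\<in>UNIV. ds l * gtr Gm l)"
proof -
  have expand: "Gi i j * (\<Sum>k\<in>UNIV. \<Sum>l\<in>UNIV. Gm k j l * shift l i k)
     = (\<Sum>k\<in>UNIV. Gi i j * Gm k j i * ds k) + (\<Sum>k\<in>UNIV. Gi i j * Gm k j k * ds i)
       - (\<Sum>k\<in>UNIV. \<Sum>l\<in>UNIV. Gi i j * G i k * Gm k j l * up l)" for i j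
  proof -
    have "Gi i j * (\<Sum>k\<in>UNIV. \<Sum>l\<in>UNIV. Gm k j l * shift l i k) = (\<Sum>k\<in>UNIV. \<Sum>l\<in>UNIV.
       (if l = i then Gi i j * Gm k j l * ds k else 0) + (if l = k then Gi i j * Gm k j l * ds i else 0)
       - Gi i j * G i k * Gm k j l * up l)"
      unfolding sum_distrib_left
      by (rule sum.cong[OF refl], rule sum.cong[OF refl]) (auto simp: shift_def algebra_simps)
    then show ?thesis by (simp add: sum.distrib sum_subtractf)
  qed
  have first: "(\<Sum>i\<in>UNIV. \<Sum>j\<in>UNIV. \<Sum>k\<in>UNIV. Gi i j * Gm k j i * ds k) = (\<Sum>l\<in>UNIV. ds l * gtr Gm l)"
    unfolding gtr_def sum_distrib_left
    by (rule trans[OF sum3_innermost_out], intro sum.cong refl) (subst Gm_sym, simp add: mult_ac)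
  have second: "(\<Sum>i\<in>UNIV. \<Sum>j\<in>UNIV. \<Sum>k\<in>UNIV. Gi i j * Gm k j k * ds i) = (\<Sum>j\<in>UNIV. up j * ctr Gm j)"
  proof -
    have "(\<Sum>i\<in>UNIV. \<Sum>j\<in>UNIV. \<Sum>k\<in>UNIV. Gi i j * Gm k j k * ds i)
        = (\<Sum>j\<in>UNIV. \<Sum>i\<in>UNIV. \<Sum>k\<in>UNIV. Gi j i * ds i * Gm k k j)"
      by (rule trans[OF sum.swap], intro sum.cong refl) (subst Gi_sym, subst Gm_sym, simp add: mult_ac)
    also have "\<dots> = (\<Sum>j\<in>UNIV. up j * ctr Gm j)"
      unfolding up_def ctr_def sum_product by (simp add: mult_ac)
    finally show ?thesis .
  qed
  have third: "(\<Sum>i\<in>UNIV. \<Sum>j\<in>UNIV. \<Sum>k\<in>UNIV. \<Sum>l\<in>UNIV. Gi i j * G i k * Gm k j l * up l)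
      = (\<Sum>j\<in>UNIV. up j * ctr Gm j)"
  proof -
    have "(\<Sum>i\<in>UNIV. \<Sum>j\<in>UNIV. \<Sum>k\<in>UNIV. \<Sum>l\<in>UNIV. Gi i j * G i k * Gm k j l * up l)
        = (\<Sum>j\<in>UNIV. \<Sum>k\<in>UNIV. \<Sum>l\<in>UNIV. (\<Sum>i\<in>UNIV. Gi j i * G i k) * Gm k j l * up l)"
      by (rule trans[OF sum4_outermost_in], simp add: sum_distrib_right, intro sum.cong refl)
         (subst Gi_sym, simp)
    also have "\<dots> = (\<Sum>j\<in>UNIV. \<Sum>l\<in>UNIV. Gm j j l * up l)" by (simp add: Gi_G)
    also have "\<dots> = (\<Sum>j\<in>UNIV. up j * ctr Gm j)"
      unfolding ctr_def by (subst sum.swap) (simp add: sum_distrib_left sum_distrib_right mult_ac)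
    finally show ?thesis .
  qed
  show ?thesis unfolding expand by (simp add: sum.distrib sum_subtractf first second third)
qed

lemma contr_cross_shift_Gm:
  assumes Gm_sym: "\<And>k i j. Gm k i j = Gm k j i"
  shows "(\<Sum>i\<in>UNIV. \<Sum>j\<in>UNIV. Gi i j * (\<Sum>k\<in>UNIV. \<Sum>l\<in>UNIV. shift k j l * Gm l i k))
     = (\<Sum>l\<in>UNIV. ds l * gtr Gm l)"
proof -
  have expand: "Gi i j * (\<Sum>k\<in>UNIV. \<Sum>l\<in>UNIV. shift k j l * Gm l i k)
     = (\<Sum>l\<in>UNIV. Gi i j * ds l * Gm l i j) + (\<Sum>k\<in>UNIV. Gi i j * ds j * Gm k i k)
       - (\<Sum>k\<in>UNIV. \<Sum>l\<in>UNIV. Gi i j * G j l * up k * Gm l i k)" for i j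
  proof -
    have "Gi i j * (\<Sum>k\<in>UNIV. \<Sum>l\<in>UNIV. shift k j l * Gm l i k) = (\<Sum>k\<in>UNIV. \<Sum>l\<in>UNIV.
       (if k = j then Gi i j * ds l * Gm l i k else 0) + (if l = k then Gi i j * ds j * Gm l i k else 0)
       - Gi i j * G j l * up k * Gm l i k)"
      unfolding sum_distrib_left
      by (rule sum.cong[OF refl], rule sum.cong[OF refl]) (auto simp: shift_def algebra_simps)
    then show ?thesis by (simp add: sum.distrib sum_subtractf)
  qed
  have first: "(\<Sum>i\<in>UNIV. \<Sum>j\<in>UNIV. \<Sum>l\<in>UNIV. Gi i j * ds l * Gm l i j) = (\<Sum>l\<in>UNIV. ds l * gtr Gm l)"
    by (rule trans[OF sum3_innermost_out]) (simp add: gtr_def sum_distrib_left mult_ac)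
  have second: "(\<Sum>i\<in>UNIV. \<Sum>j\<in>UNIV. \<Sum>k\<in>UNIV. Gi i j * ds j * Gm k i k) = (\<Sum>j\<in>UNIV. up j * ctr Gm j)"
    unfolding up_def ctr_def sum_product
    by (intro sum.cong refl) (subst Gm_sym, simp add: mult_ac)
  have third: "(\<Sum>i\<in>UNIV. \<Sum>j\<in>UNIV. \<Sum>k\<in>UNIV. \<Sum>l\<in>UNIV. Gi i j * G j l * up k * Gm l i k)
      = (\<Sum>j\<in>UNIV. up j * ctr Gm j)"
  proof -
    have "(\<Sum>i\<in>UNIV. \<Sum>j\<in>UNIV. \<Sum>k\<in>UNIV. \<Sum>l\<in>UNIV. Gi i j * G j l * up k * Gm l i k)
        = (\<Sum>i\<in>UNIV. \<Sum>k\<in>UNIV. \<Sum>l\<in>UNIV. (\<Sum>j\<in>UNIV. Gi i j * G j l) * up k * Gm l i k)"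
      by (rule sum.cong[OF refl], subst sum3_outermost_in) (simp add: sum_distrib_right)
    also have "\<dots> = (\<Sum>i\<in>UNIV. \<Sum>k\<in>UNIV. up k * Gm i i k)" by (simp add: Gi_G)
    also have "\<dots> = (\<Sum>j\<in>UNIV. up j * ctr Gm j)"
      unfolding ctr_def by (subst sum.swap) (simp add: sum_distrib_left sum_distrib_right mult_ac)
    finally show ?thesis .
  qed
  show ?thesis unfolding expand by (simp add: sum.distrib sum_subtractf first second third)
qed

lemma contr_ricci_quadratic_shift:
  assumes Gm_sym: "\<And>k i j. Gm k i j = Gm k j i"
  shows "(\<Sum>i\<in>UNIV. \<Sum>j\<in>UNIV. Gi i j * (\<Sum>k\<in>UNIV. \<Sum>l\<in>UNIV.
            (Gm k k l + shift k k l) * (Gm l i j + shift l i j)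
            - (Gm k j l + shift k j l) * (Gm l i k + shift l i k)))
       = (\<Sum>i\<in>UNIV. \<Sum>j\<in>UNIV. Gi i j * (\<Sum>k\<in>UNIV. \<Sum>l\<in>UNIV. Gm k k l * Gm l i j - Gm k j l * Gm l i k))
         + (2 - real CARD('n)) * (\<Sum>l\<in>UNIV. ctr Gm l * up l)
         + (real CARD('n) - 2) * (\<Sum>l\<in>UNIV. ds l * gtr Gm l)
         - (real CARD('n) - 1) * (real CARD('n) - 2) * (\<Sum>l\<in>UNIV. ds l * up l)"
proof -
  have expand: "(Gm k k l + shift k k l) * (Gm l i j + shift l i j)
       - (Gm k j l + shift k j l) * (Gm l i k + shift l i k)
     = (Gm k k l * Gm l i j - Gm k j l * Gm l i k) + Gm k k l * shift l i j + shift k k l * Gm l i j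
       + shift k k l * shift l i j - Gm k j l * shift l i k - shift k j l * Gm l i k
       - shift k j l * shift l i k" for i j k l
    by (simp add: algebra_simps)
  show ?thesis
    unfolding expand
    by (simp only: sum.distrib sum_subtractf distrib_left right_diff_distrib
        contr_shift_shift contr_cross_shift_shift contr_Gm_shift contr_shift_Gm
        contr_cross_Gm_shift[OF Gm_sym] contr_cross_shift_Gm[OF Gm_sym])
       (simp add: algebra_simps)
qed

end

section \<open>Calculus in a Riemannian chart\<close>

text \<open>Differentiability of a function and of its first partials is all that the computation below
  uses of smoothness.\<close>

definition C2_on :: "'n::finite pt set \<Rightarrow> ('n pt \<Rightarrow> real) \<Rightarrow> bool" where
  "C2_on U f \<longleftrightarrow> (\<forall>y\<in>U. f differentiable (at y) \<and> (\<forall>j. pd j f differentiable (at y)))"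

lemma smooth_on_imp_C2_on:
  assumes "smooth_on U f"
  shows "C2_on U f"
  unfolding C2_on_def
proof (intro ballI conjI allI)
  fix y j assume "y \<in> U"
  then have "pds [] f differentiable (at y)" "pds [j] f differentiable (at y)"
    using assms unfolding smooth_on_def by blast+
  then show "f differentiable (at y)" "pd j f differentiable (at y)" by simp_all
qed

lemma C2_onD: "C2_on U f \<Longrightarrow> y \<in> U \<Longrightarrow> f differentiable (at y)"
  by (simp add: C2_on_def)

lemma C2_onD_pd: "C2_on U f \<Longrightarrow> y \<in> U \<Longrightarrow> pd j f differentiable (at y)"
  by (simp add: C2_on_def)

definition ginner :: "('n::finite pt \<Rightarrow> real^'n^'n) \<Rightarrow> ('n pt \<Rightarrow> real) \<Rightarrow> ('n pt \<Rightarrow> real) \<Rightarrow> 'n pt \<Rightarrow> real"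
  where "ginner g a b x = (\<Sum>k\<in>UNIV. \<Sum>l\<in>UNIV. ginv g x $ k $ l * pd k a x * pd l b x)"

lemma gdot_scaleR_right: "gdot g x a (c *\<^sub>R b) = c * gdot g x a b"
  by (simp add: gdot_def matrix_vector_mult_scaleR)

lemma gdot_scaleR_left: "gdot g x (c *\<^sub>R a) b = c * gdot g x a b"
  by (simp add: gdot_def)

lemma gdot_add_right: "gdot g x a (b + d) = gdot g x a b + gdot g x a d"
  by (simp add: gdot_def matrix_vector_right_distrib inner_add_right)

locale riem_chart =
  fixes U :: "'n::finite pt set" and g :: "'n pt \<Rightarrow> real^'n^'n"
  assumes open_U: "open U" and riem_metric: "riem_metric_on U g"
begin

lemma C2_on_metric: "C2_on U (\<lambda>y. g y $ i $ j)"
  using riem_metric smooth_on_imp_C2_on unfolding riem_metric_on_def by blast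

lemma metric_sym: "x \<in> U \<Longrightarrow> g x $ i $ j = g x $ j $ i"
proof -
  assume "x \<in> U"
  then have "transpose (g x) $ i $ j = g x $ i $ j" using riem_metric unfolding riem_metric_on_def by simp
  then show ?thesis by (simp add: transpose_def)
qed

lemma ginv_inverse: "x \<in> U \<Longrightarrow> g x ** ginv g x = mat 1 \<and> ginv g x ** g x = mat 1"
proof -
  assume x: "x \<in> U"
  have "\<forall>\<xi>. g x *v \<xi> = 0 \<longrightarrow> \<xi> = 0" using riem_metric x unfolding riem_metric_on_def
    by (metis inner_zero_right less_irrefl)
  then have "\<exists>B. B ** g x = mat 1" by (simp add: matrix_left_invertible_ker)
  then have "invertible (g x)" using invertible_left_inverse by blast
  then have "\<exists>A'. g x ** A' = mat 1 \<and> A' ** g x = mat 1" unfolding invertible_def .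
  then show ?thesis unfolding ginv_def matrix_inv_def by (rule someI_ex)
qed

lemma det_metric_nonzero: "x \<in> U \<Longrightarrow> det (g x) \<noteq> 0"
  using ginv_inverse invertible_det_nz invertible_def by blast

lemma ginv_metric: "x \<in> U \<Longrightarrow> (\<Sum>l\<in>UNIV. ginv g x $ k $ l * g x $ l $ j) = (if k = j then 1 else 0)"
proof -
  assume x: "x \<in> U"
  have "(ginv g x ** g x) $ k $ j = mat 1 $ k $ j" using ginv_inverse[OF x] by simp
  then show ?thesis by (simp add: matrix_matrix_mult_def mat_def)
qed

lemma metric_ginv: "x \<in> U \<Longrightarrow> (\<Sum>l\<in>UNIV. g x $ k $ l * ginv g x $ l $ j) = (if k = j then 1 else 0)"
proof -
  assume x: "x \<in> U"
  have "(g x ** ginv g x) $ k $ j = mat 1 $ k $ j" using ginv_inverse[OF x] by simp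
  then show ?thesis by (simp add: matrix_matrix_mult_def mat_def)
qed

lemma ginv_metric': "x \<in> U \<Longrightarrow> (\<Sum>l\<in>UNIV. ginv g x $ k $ l * g x $ j $ l) = (if k = j then 1 else 0)"
  using ginv_metric[of x k j] by (simp add: metric_sym[of x j])

lemma trace_ginv_metric: "x \<in> U \<Longrightarrow> (\<Sum>i\<in>UNIV. \<Sum>j\<in>UNIV. ginv g x $ i $ j * g x $ i $ j) = real CARD('n)"
  using ginv_metric'[of x] by simp

lemma ginv_sym: "x \<in> U \<Longrightarrow> ginv g x $ i $ j = ginv g x $ j $ i"
proof -
  assume x: "x \<in> U"
  let ?G = "g x" and ?B = "ginv g x"
  have "transpose ?G = ?G" using riem_metric x unfolding riem_metric_on_def by blast
  then have "transpose ?B ** ?G = transpose (?G ** ?B)" by (metis matrix_transpose_mul)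
  also have "\<dots> = mat 1" using ginv_inverse[OF x] by (simp add: transpose_mat)
  finally have left_inv: "transpose ?B ** ?G = mat 1" .
  have "transpose ?B = transpose ?B ** (?G ** ?B)" using ginv_inverse[OF x] by simp
  also have "\<dots> = ?B" using left_inv by (simp add: matrix_mul_assoc)
  finally have "transpose ?B $ i $ j = ?B $ i $ j" by simp
  then show ?thesis by (simp add: transpose_def)
qed

lemma ginv_cramer: "x \<in> U \<Longrightarrow>
  ginv g x $ k $ l = det (\<chi> i j. if j = k then axis l 1 $ i else g x $ i $ j) / det (g x)"
proof -
  assume x: "x \<in> U"
  have "g x *v (ginv g x *v axis l 1) = axis l 1" using ginv_inverse[OF x]
    by (simp add: matrix_vector_mul_assoc)
  then have "ginv g x *v axis l 1
      = (\<chi> k. det (\<chi> i j. if j = k then axis l 1 $ i else g x $ i $ j) / det (g x))"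
    using cramer[OF det_metric_nonzero[OF x]] by blast
  moreover have "(ginv g x *v axis l 1) $ k = ginv g x $ k $ l"
    by (simp add: matrix_vector_mult_def axis_def if_distrib cong: if_cong)
  ultimately show ?thesis by simp
qed

lemma differentiable_ginv: "x \<in> U \<Longrightarrow> (\<lambda>y. ginv g y $ k $ l) differentiable (at x)"
proof -
  assume x: "x \<in> U"
  have "(\<lambda>y. det (\<chi> i j. if j = k then axis l 1 $ i else g y $ i $ j) / det (g y)) differentiable (at x)"
  proof (rule differentiable_divide)
    show "(\<lambda>y. det (\<chi> i j. if j = k then axis l 1 $ i else g y $ i $ j)) differentiable at x"
      by (rule differentiable_det) (case_tac "j = k", simp_all add: C2_onD[OF C2_on_metric x])
    show "(\<lambda>y. det (g y)) differentiable at x"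
      by (rule differentiable_det) (auto intro: C2_onD[OF C2_on_metric x])
    show "det (g x) \<noteq> 0" using det_metric_nonzero[OF x] .
  qed
  then show ?thesis
    by (rule differentiable_cong_open[OF open_U x, rotated]) (simp add: ginv_cramer)
qed

lemma pd_ginv_metric: "x \<in> U \<Longrightarrow>
  (\<Sum>l\<in>UNIV. pd a (\<lambda>y. ginv g y $ k $ l) x * g x $ l $ j)
    = - (\<Sum>l\<in>UNIV. ginv g x $ k $ l * pd a (\<lambda>y. g y $ l $ j) x)"
proof -
  assume x: "x \<in> U"
  have "pd a (\<lambda>y. \<Sum>l\<in>UNIV. ginv g y $ k $ l * g y $ l $ j) x = pd a (\<lambda>y. if k = j then 1 else 0) x"
    by (rule pd_cong_open[OF open_U x])
       (auto simp: ginv_metric intro!: differentiable_sum differentiable_mult differentiable_ginv[OF x]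
         C2_onD[OF C2_on_metric x])
  moreover have "pd a (\<lambda>y. \<Sum>l\<in>UNIV. ginv g y $ k $ l * g y $ l $ j) x
     = (\<Sum>l\<in>UNIV. ginv g x $ k $ l * pd a (\<lambda>y. g y $ l $ j) x + pd a (\<lambda>y. ginv g y $ k $ l) x * g x $ l $ j)"
    by (subst pd_sum)
       (auto intro!: sum.cong pd_mult differentiable_mult differentiable_ginv[OF x] C2_onD[OF C2_on_metric x])
  ultimately show ?thesis by (simp add: pd_const sum.distrib eq_neg_iff_add_eq_0 add.commute)
qed

lemma pd_ginv: "x \<in> U \<Longrightarrow> pd a (\<lambda>y. ginv g y $ k $ m) x =
   - (\<Sum>l\<in>UNIV. \<Sum>j\<in>UNIV. ginv g x $ k $ l * pd a (\<lambda>y. g y $ l $ j) x * ginv g x $ j $ m)"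
proof -
  assume x: "x \<in> U"
  have "pd a (\<lambda>y. ginv g y $ k $ m) x
      = (\<Sum>l\<in>UNIV. pd a (\<lambda>y. ginv g y $ k $ l) x * (\<Sum>j\<in>UNIV. g x $ l $ j * ginv g x $ j $ m))"
    by (simp add: metric_ginv[OF x] if_distrib cong: if_cong)
  also have "\<dots> = (\<Sum>j\<in>UNIV. (\<Sum>l\<in>UNIV. pd a (\<lambda>y. ginv g y $ k $ l) x * g x $ l $ j) * ginv g x $ j $ m)"
    by (simp add: sum_distrib_left sum_distrib_right mult.assoc) (rule sum.swap)
  also have "\<dots> = - (\<Sum>l\<in>UNIV. \<Sum>j\<in>UNIV. ginv g x $ k $ l * pd a (\<lambda>y. g y $ l $ j) x * ginv g x $ j $ m)"
    by (simp add: pd_ginv_metric[OF x] sum_distrib_right sum_negf) (rule sum.swap)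
  finally show ?thesis .
qed

abbreviation dg where "dg l i j x \<equiv> pd l (\<lambda>y. g y $ i $ j) x"

lemma dg_sym: "x \<in> U \<Longrightarrow> dg l i j x = dg l j i x"
  by (rule pd_cong_open[OF open_U]) (auto simp: metric_sym C2_onD[OF C2_on_metric])

lemma christoffel_sym: "x \<in> U \<Longrightarrow> christoffel g k i j x = christoffel g k j i x"
  unfolding christoffel_def by (simp add: dg_sym[of x _ i j] algebra_simps)

lemma differentiable_christoffel: "x \<in> U \<Longrightarrow> christoffel g k i j differentiable (at x)"
proof -
  assume x: "x \<in> U"
  have "(\<lambda>x. (1/2) * (\<Sum>l\<in>UNIV. ginv g x $ k $ l *
      (pd i (\<lambda>y. g y $ j $ l) x + pd j (\<lambda>y. g y $ i $ l) x - pd l (\<lambda>y. g y $ i $ j) x)))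
      differentiable (at x)"
    by (intro differentiable_mult differentiable_const differentiable_sum ballI finite_UNIV
        differentiable_add differentiable_diff differentiable_ginv[OF x] C2_onD_pd[OF C2_on_metric x])
       simp_all
  then show ?thesis by (simp add: christoffel_def[abs_def])
qed

lemma christoffel_trace: "x \<in> U \<Longrightarrow> (\<Sum>k\<in>UNIV. christoffel g k k l x)
   = (1/2) * (\<Sum>k\<in>UNIV. \<Sum>a\<in>UNIV. ginv g x $ k $ a * dg l k a x)"
proof -
  assume x: "x \<in> U"
  have "(\<Sum>k\<in>UNIV. \<Sum>a\<in>UNIV. ginv g x $ k $ a * dg k l a x)
      = (\<Sum>k\<in>UNIV. \<Sum>a\<in>UNIV. ginv g x $ k $ a * dg a k l x)"
    by (subst sum.swap) (simp add: ginv_sym[OF x] dg_sym[OF x])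
  then show ?thesis unfolding christoffel_def
    by (simp add: sum_distrib_left[symmetric] sum.distrib sum_subtractf algebra_simps
        sum_divide_distrib[symmetric])
qed

lemma ginner_sym: "x \<in> U \<Longrightarrow> ginner g a b x = ginner g b a x"
  unfolding ginner_def by (subst sum.swap) (simp add: ginv_sym[of x] mult_ac)

lemma gdot_grad_grad: "x \<in> U \<Longrightarrow> gdot g x (grad g a x) (grad g b x) = ginner g a b x"
proof -
  assume x: "x \<in> U"
  have "g x *v grad g b x = (\<chi> i. pd i b x)"
    using ginv_inverse[OF x] by (simp add: grad_def matrix_vector_mul_assoc)
  then have "gdot g x (grad g a x) (grad g b x) = grad g a x \<bullet> (\<chi> i. pd i b x)" by (simp add: gdot_def)
  also have "\<dots> = ginner g a b x"
    unfolding grad_def ginner_def inner_vec_def matrix_vector_mult_def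
    by (simp add: sum_distrib_left sum_distrib_right, rule trans[OF sum.swap])
       (simp add: ginv_sym[OF x] mult_ac)
  finally show ?thesis .
qed

lemma C2_on_mult: "C2_on U a \<Longrightarrow> C2_on U b \<Longrightarrow> C2_on U (\<lambda>y. a y * b y)"
  unfolding C2_on_def
proof (intro ballI allI conjI)
  fix y j assume a: "\<forall>y\<in>U. a differentiable at y \<and> (\<forall>j. pd j a differentiable at y)"
    and b: "\<forall>y\<in>U. b differentiable at y \<and> (\<forall>j. pd j b differentiable at y)" and y: "y \<in> U"
  then show "(\<lambda>y. a y * b y) differentiable at y" by (intro differentiable_mult) auto
  have "(\<lambda>z. a z * pd j b z + pd j a z * b z) differentiable at y"
    using a b y by (intro differentiable_add differentiable_mult) auto
  then show "pd j (\<lambda>y. a y * b y) differentiable at y"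
    by (rule differentiable_cong_open[OF open_U y, rotated]) (use a b in \<open>simp add: pd_mult\<close>)
qed

lemma C2_on_exp: "C2_on U f \<Longrightarrow> C2_on U (\<lambda>y. exp (f y))"
  unfolding C2_on_def
proof (intro ballI allI conjI)
  fix y j assume f: "\<forall>y\<in>U. f differentiable at y \<and> (\<forall>j. pd j f differentiable at y)" and y: "y \<in> U"
  then show "(\<lambda>y. exp (f y)) differentiable at y" by (intro differentiable_exp_comp) auto
  have "(\<lambda>z. exp (f z) * pd j f z) differentiable at y"
    using f y by (intro differentiable_mult differentiable_exp_comp) auto
  then show "pd j (\<lambda>y. exp (f y)) differentiable at y"
    by (rule differentiable_cong_open[OF open_U y, rotated]) (use f in \<open>simp add: pd_exp\<close>)
qed

lemma C2_on_cmult: "C2_on U f \<Longrightarrow> C2_on U (\<lambda>y. c * f y)"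
proof -
  have "C2_on U (\<lambda>y. c)" by (simp add: C2_on_def pd_def[abs_def])
  then show "C2_on U f \<Longrightarrow> C2_on U (\<lambda>y. c * f y)" using C2_on_mult by blast
qed

lemma pd_pd_mult: "C2_on U a \<Longrightarrow> C2_on U b \<Longrightarrow> x \<in> U \<Longrightarrow>
  pd i (pd j (\<lambda>y. a y * b y)) x
    = a x * pd i (pd j b) x + pd i a x * pd j b x + pd j a x * pd i b x + pd i (pd j a) x * b x"
proof -
  assume a: "C2_on U a" and b: "C2_on U b" and x: "x \<in> U"
  note diff = C2_onD[OF a x] C2_onD[OF b x] C2_onD_pd[OF a x] C2_onD_pd[OF b x]
  have "pd i (pd j (\<lambda>y. a y * b y)) x = pd i (\<lambda>z. a z * pd j b z + pd j a z * b z) x"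
    by (rule pd_cong_open[OF open_U x, symmetric])
       (auto simp: pd_mult C2_onD[OF a] C2_onD[OF b] intro!: differentiable_add differentiable_mult diff)
  also have "\<dots> = a x * pd i (pd j b) x + pd i a x * pd j b x + (pd j a x * pd i b x + pd i (pd j a) x * b x)"
    by (simp add: pd_add pd_mult differentiable_mult diff)
  finally show ?thesis by simp
qed

lemma lap_mult: "C2_on U a \<Longrightarrow> C2_on U b \<Longrightarrow> x \<in> U \<Longrightarrow>
   lap g (\<lambda>y. a y * b y) x = a x * lap g b x + b x * lap g a x + 2 * ginner g a b x"
proof -
  assume a: "C2_on U a" and b: "C2_on U b" and x: "x \<in> U"
  have pd_ab: "pd k (\<lambda>y. a y * b y) x = a x * pd k b x + pd k a x * b x" for k
    by (simp add: pd_mult C2_onD[OF a x] C2_onD[OF b x])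
  have "lap g (\<lambda>y. a y * b y) x = a x * lap g b x + b x * lap g a x
      + ((\<Sum>i\<in>UNIV. \<Sum>j\<in>UNIV. ginv g x $ i $ j * pd i a x * pd j b x)
         + (\<Sum>i\<in>UNIV. \<Sum>j\<in>UNIV. ginv g x $ i $ j * pd j a x * pd i b x))"
    unfolding lap_def pd_pd_mult[OF a b x] pd_ab
    by (simp add: algebra_simps sum.distrib sum_subtractf sum_distrib_left)
  also have "(\<Sum>i\<in>UNIV. \<Sum>j\<in>UNIV. ginv g x $ i $ j * pd j a x * pd i b x) = ginner g a b x"
    unfolding ginner_def by (rule trans[OF sum.swap]) (simp add: ginv_sym[OF x])
  finally show ?thesis by (simp add: ginner_def)
qed

lemma ginner_mult_right: "C2_on U a \<Longrightarrow> C2_on U b \<Longrightarrow> x \<in> U \<Longrightarrow>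
   ginner g f (\<lambda>y. a y * b y) x = a x * ginner g f b x + b x * ginner g f a x"
  by (simp add: ginner_def pd_mult C2_onD algebra_simps sum.distrib sum_distrib_left)

lemma ginner_mult_left: "C2_on U a \<Longrightarrow> C2_on U b \<Longrightarrow> x \<in> U \<Longrightarrow>
   ginner g (\<lambda>y. a y * b y) f x = a x * ginner g b f x + b x * ginner g a f x"
  using ginner_mult_right[of a b x f] ginner_sym[of x] by metis

lemma pd_exp_scaled: "C2_on U f \<Longrightarrow> x \<in> U \<Longrightarrow>
   pd k (\<lambda>y. exp (c * f y)) x = exp (c * f x) * (c * pd k f x)"
  by (simp add: pd_exp pd_cmult C2_onD differentiable_mult)

lemma lap_exp_scaled: "C2_on U f \<Longrightarrow> x \<in> U \<Longrightarrow>
   lap g (\<lambda>y. exp (c * f y)) x = exp (c * f x) * (c * lap g f x + c\<^sup>2 * ginner g f f x)"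
proof -
  assume f: "C2_on U f" and x: "x \<in> U"
  have cf: "C2_on U (\<lambda>y. c * f y)" by (rule C2_on_cmult[OF f])
  note diff = differentiable_mult differentiable_exp_comp C2_onD[OF cf x] C2_onD_pd[OF f x]
  have pd_pd: "pd i (pd j (\<lambda>y. exp (c * f y))) x
      = exp (c * f x) * (c * pd i (pd j f) x + c * pd i f x * (c * pd j f x))" for i j
  proof -
    have "pd i (pd j (\<lambda>y. exp (c * f y))) x = pd i (\<lambda>y. exp (c * f y) * (c * pd j f y)) x"
      by (rule pd_cong_open[OF open_U x, symmetric])
         (auto simp: pd_exp_scaled[OF f] intro!: diff differentiable_const)
    also have "\<dots> = exp (c * f x) * (c * pd i (pd j f) x) + exp (c * f x) * (c * pd i f x) * (c * pd j f x)"
      by (subst pd_mult) (auto simp: pd_exp_scaled[OF f x] pd_cmult C2_onD_pd[OF f x] intro!: diff)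
    finally show ?thesis by (simp add: algebra_simps)
  qed
  show ?thesis unfolding lap_def pd_pd pd_exp_scaled[OF f x]
    by (simp add: ginner_def algebra_simps sum.distrib sum_subtractf sum_distrib_left power2_eq_square)
qed

lemma ginner_exp_scaled_right: "C2_on U f \<Longrightarrow> x \<in> U \<Longrightarrow>
   ginner g h (\<lambda>y. exp (c * f y)) x = exp (c * f x) * c * ginner g h f x"
  by (simp add: ginner_def pd_exp_scaled algebra_simps sum_distrib_left)

lemma ginner_exp_scaled_left: "C2_on U f \<Longrightarrow> x \<in> U \<Longrightarrow>
   ginner g (\<lambda>y. exp (c * f y)) h x = exp (c * f x) * c * ginner g f h x"
  using ginner_exp_scaled_right[of f x h c] ginner_sym[of x] by metis

lemma grad_mult: "C2_on U a \<Longrightarrow> C2_on U b \<Longrightarrow> x \<in> U \<Longrightarrow>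
   grad g (\<lambda>y. a y * b y) x = a x *\<^sub>R grad g b x + b x *\<^sub>R grad g a x"
  unfolding grad_def
  by (simp add: pd_mult C2_onD vec_eq_iff matrix_vector_mult_def algebra_simps sum.distrib sum_distrib_left)

lemma grad_exp_scaled: "C2_on U f \<Longrightarrow> x \<in> U \<Longrightarrow>
   grad g (\<lambda>y. exp (c * f y)) x = (exp (c * f x) * c) *\<^sub>R grad g f x"
  unfolding grad_def
  by (simp add: pd_exp_scaled vec_eq_iff matrix_vector_mult_def algebra_simps sum_distrib_left)

lemma tDW_minus_tD:
  assumes x: "x \<in> U" and v_pos: "v x > 0" and m_ne: "m + real CARD('n) - 1 \<noteq> 0"
    and n_ge: "CARD('n) \<ge> 3"
  shows "(real CARD('n) + 2*w - 2) *\<^sub>R tDW g m mu v w u x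
          - (m + real CARD('n) + 2*w - 2) *\<^sub>R tD g w u x
        = (- m / v x * tmetric g x (tD g w u x)
              (tJ g v x + ((mu - (m - 1) * tmetric g x (tJ g v x) (tJ g v x))
                             / (2 * (m + real CARD('n) - 1) * v x)) *\<^sub>R tX)) *\<^sub>R tX"
proof -
  define n where "n = real CARD('n)"
  define D where "D = m + n - 1"
  have D_ne: "D \<noteq> 0" using m_ne by (simp add: D_def n_def)
  have n_ne: "n \<noteq> 0" "n - 1 \<noteq> 0" using n_ge by (simp_all add: n_def)
  have m_n_D: "m + n - 1 = D" by (simp add: D_def)
  have scal_J: "scal g x = (2 * n - 2) * schJ g x" using n_ne by (simp add: schJ_def n_def)
  show ?thesis
    unfolding tDW_def tD_def tJ_def tX_def tmetric_def wlap_def JW_def Rmphi_def Let_def n_def[symmetric]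
    apply (simp only: prod.case scaleR_Pair gdot_scaleR_right gdot_scaleR_left gdot_grad_grad[OF x]
        ginner_sym[OF x, of u v] m_n_D scal_J diff_Pair add_Pair prod.inject real_scaleR_def gdot_add_right)
    apply (intro conjI)
    subgoal by simp
    subgoal by (simp add: scaleR_scaleR mult.commute)
    subgoal
    proof -
      have gdot_zero: "gdot g x a 0 = 0" for a by (simp add: gdot_def)
      have v_ne: "v x \<noteq> 0" using v_pos by simp
      show ?thesis using v_ne D_ne n_ne
        by (simp add: gdot_zero power2_eq_square field_simps) (simp add: D_def algebra_simps)
    qed
    done
qed

end

section \<open>Conformal change of scale\<close>

locale conformal_change = riem_chart U g for U :: "'n::finite pt set" and g +
  fixes s :: "'n pt \<Rightarrow> real"
  assumes C2_on_s: "C2_on U s"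
begin

abbreviation ghat where "ghat \<equiv> (\<lambda>y. exp (2 * s y) *\<^sub>R g y)"

abbreviation ds_up where "ds_up k y \<equiv> (\<Sum>l\<in>UNIV. ginv g y $ k $ l * pd l s y)"

definition chr_shift :: "'n \<Rightarrow> 'n \<Rightarrow> 'n \<Rightarrow> 'n pt \<Rightarrow> real" where
  "chr_shift k i j y = (if k = i then pd j s y else 0) + (if k = j then pd i s y else 0) - g y $ i $ j * ds_up k y"

lemma ginv_ghat: "y \<in> U \<Longrightarrow> ginv ghat y = exp (-2 * s y) *\<^sub>R ginv g y"
proof -
  assume y: "y \<in> U"
  let ?c = "exp (2 * s y)" and ?G = "g y" and ?B = "ginv g y"
  have c: "exp (-2 * s y) = inverse ?c" by (simp add: exp_minus[symmetric])
  have right_inv: "(?c *\<^sub>R ?G) ** (inverse ?c *\<^sub>R ?B) = mat 1"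
    and left_inv: "(inverse ?c *\<^sub>R ?B) ** (?c *\<^sub>R ?G) = mat 1"
    using ginv_inverse[OF y] by (simp_all add: matrix_scalar_ac scalar_matrix_assoc[symmetric])
  then have "\<exists>A'. (?c *\<^sub>R ?G) ** A' = mat 1 \<and> A' ** (?c *\<^sub>R ?G) = mat 1" by blast
  then have ghat_inv: "(?c *\<^sub>R ?G) ** ginv ghat y = mat 1 \<and> ginv ghat y ** (?c *\<^sub>R ?G) = mat 1"
    unfolding ginv_def matrix_inv_def by (rule someI_ex)
  then have "ginv ghat y = ginv ghat y ** ((?c *\<^sub>R ?G) ** (inverse ?c *\<^sub>R ?B))"
    using right_inv by simp
  also have "\<dots> = inverse ?c *\<^sub>R ?B" using ghat_inv by (simp add: matrix_mul_assoc)
  finally show ?thesis using c by simp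
qed

lemma ginv_ghat_nth: "y \<in> U \<Longrightarrow> ginv ghat y $ k $ l = exp (-2 * s y) * ginv g y $ k $ l"
  by (simp add: ginv_ghat)

lemma pd_ghat_nth: "x \<in> U \<Longrightarrow>
  pd l (\<lambda>y. exp (2 * s y) * g y $ i $ j) x = exp (2 * s x) * (2 * pd l s x * g x $ i $ j + dg l i j x)"
proof -
  assume x: "x \<in> U"
  have "pd l (\<lambda>y. exp (2 * s y) * g y $ i $ j) x
      = exp (2 * s x) * dg l i j x + exp (2 * s x) * (2 * pd l s x) * g x $ i $ j"
    by (subst pd_mult)
       (auto simp: pd_exp pd_cmult differentiable_exp_comp differentiable_mult C2_onD[OF C2_on_s x]
         C2_onD[OF C2_on_metric x])
  then show ?thesis by (simp add: algebra_simps)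
qed

lemma christoffel_ghat: "x \<in> U \<Longrightarrow> christoffel ghat k i j x = christoffel g k i j x + chr_shift k i j x"
proof -
  assume x: "x \<in> U"
  have exp_cancel: "exp (-2 * s x) * exp (2 * s x) = 1" by (simp add: mult_exp_exp)
  have "christoffel ghat k i j x = (1/2) * (\<Sum>l\<in>UNIV. (exp (-2 * s x) * exp (2 * s x)) *
      (ginv g x $ k $ l * (dg i j l x + dg j i l x - dg l i j x)
       + 2 * (ginv g x $ k $ l * (pd i s x * g x $ j $ l + pd j s x * g x $ i $ l - pd l s x * g x $ i $ j))))"
    unfolding christoffel_def vector_scaleR_component real_scaleR_def
    by (simp only: ginv_ghat_nth[OF x] pd_ghat_nth[OF x]) (simp add: algebra_simps)
  also have "\<dots> = christoffel g k i j x
      + (\<Sum>l\<in>UNIV. ginv g x $ k $ l * (pd i s x * g x $ j $ l + pd j s x * g x $ i $ l - pd l s x * g x $ i $ j))"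
    unfolding exp_cancel christoffel_def by (simp add: sum.distrib sum_subtractf sum_distrib_left algebra_simps)
  also have "(\<Sum>l\<in>UNIV. ginv g x $ k $ l * (pd i s x * g x $ j $ l + pd j s x * g x $ i $ l - pd l s x * g x $ i $ j))
     = pd i s x * (\<Sum>l\<in>UNIV. ginv g x $ k $ l * g x $ j $ l) + pd j s x * (\<Sum>l\<in>UNIV. ginv g x $ k $ l * g x $ i $ l)
       - g x $ i $ j * ds_up k x"
    by (simp add: sum.distrib sum_subtractf sum_distrib_left algebra_simps)
  also have "\<dots> = chr_shift k i j x" by (simp add: ginv_metric'[OF x] chr_shift_def)
  finally show ?thesis .
qed

lemma chr_shift_contract:
  "(\<Sum>k\<in>UNIV. chr_shift k i j x * F k)
     = F i * pd j s x + F j * pd i s x - g x $ i $ j * (\<Sum>k\<in>UNIV. ds_up k x * F k)"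
proof -
  have "(\<Sum>k\<in>UNIV. chr_shift k i j x * F k) = (\<Sum>k\<in>UNIV. (if k = i then pd j s x * F k else 0)
     + (if k = j then pd i s x * F k else 0) - g x $ i $ j * (ds_up k x * F k))"
    by (rule sum.cong) (auto simp: chr_shift_def algebra_simps)
  then show ?thesis by (simp add: sum.distrib sum_subtractf sum_distrib_left[symmetric] mult.commute)
qed

lemma ds_up_pd: "x \<in> U \<Longrightarrow> (\<Sum>k\<in>UNIV. ds_up k x * pd k f x) = ginner g s f x"
  unfolding ginner_def
  by (simp add: sum_distrib_right, rule trans[OF sum.swap]) (simp add: ginv_sym[of x] mult_ac)

lemma lap_ghat: "x \<in> U \<Longrightarrow> lap ghat f x = exp (-2 * s x) * (lap g f x + (real CARD('n) - 2) * ginner g s f x)"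
proof -
  assume x: "x \<in> U"
  have "lap ghat f x = exp (-2 * s x) * (lap g f x
      - (\<Sum>i\<in>UNIV. \<Sum>j\<in>UNIV. ginv g x $ i $ j * (\<Sum>k\<in>UNIV. chr_shift k i j x * pd k f x)))"
    unfolding lap_def
    by (simp only: ginv_ghat_nth[OF x] christoffel_ghat[OF x])
       (simp add: sum_distrib_left algebra_simps sum.distrib sum_subtractf)
  also have "(\<Sum>i\<in>UNIV. \<Sum>j\<in>UNIV. ginv g x $ i $ j * (\<Sum>k\<in>UNIV. chr_shift k i j x * pd k f x))
     = ginner g f s x + ginner g s f x
       - (\<Sum>i\<in>UNIV. \<Sum>j\<in>UNIV. ginv g x $ i $ j * g x $ i $ j) * ginner g s f x"
    unfolding chr_shift_contract ds_up_pd[OF x]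
    by (simp add: algebra_simps sum.distrib sum_subtractf sum_distrib_left sum_distrib_right)
       (simp add: ginner_def mult_ac)
  also have "\<dots> = (2 - real CARD('n)) * ginner g s f x"
    by (simp only: trace_ginv_metric[OF x] ginner_sym[OF x, of f s]) (simp add: algebra_simps)
  finally show ?thesis by (simp add: algebra_simps)
qed

lemma differentiable_ds_up: "x \<in> U \<Longrightarrow> ds_up k differentiable (at x)"
  by (intro differentiable_sum differentiable_mult ballI finite_UNIV differentiable_ginv C2_onD_pd[OF C2_on_s])
     simp_all

lemma chr_shift_eq:
  "chr_shift k i j = (\<lambda>y. (if k = i then 1 else 0) * pd j s y + (if k = j then 1 else 0) * pd i s y
     - g y $ i $ j * ds_up k y)"
  by (rule ext) (simp add: chr_shift_def)

lemma differentiable_chr_shift: "x \<in> U \<Longrightarrow> chr_shift k i j differentiable (at x)"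
  unfolding chr_shift_eq
  by (intro differentiable_diff differentiable_add differentiable_mult differentiable_const
      differentiable_ds_up C2_onD_pd[OF C2_on_s] C2_onD[OF C2_on_metric]) simp_all

lemma pd_christoffel_ghat: "x \<in> U \<Longrightarrow>
  pd a (christoffel ghat k i j) x = pd a (christoffel g k i j) x + pd a (chr_shift k i j) x"
proof -
  assume x: "x \<in> U"
  have "pd a (christoffel ghat k i j) x = pd a (\<lambda>y. christoffel g k i j y + chr_shift k i j y) x"
    by (rule pd_cong_open[OF open_U x, symmetric])
       (auto simp: christoffel_ghat intro!: differentiable_add differentiable_christoffel[OF x]
         differentiable_chr_shift[OF x])
  then show ?thesis using pd_add[OF differentiable_christoffel[OF x] differentiable_chr_shift[OF x]] by simp
qed

lemma pd_chr_shift: "x \<in> U \<Longrightarrow> pd a (chr_shift k i j) x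
    = (if k = i then pd a (pd j s) x else 0) + (if k = j then pd a (pd i s) x else 0)
      - (dg a i j x * ds_up k x + g x $ i $ j * pd a (ds_up k) x)"
proof -
  assume x: "x \<in> U"
  have d1: "(\<lambda>y. (if k = i then 1 else 0) * pd j s y) differentiable (at x)" for k i j
    by (intro differentiable_mult differentiable_const C2_onD_pd[OF C2_on_s x])
  have d2: "(\<lambda>y. g y $ i $ j * ds_up k y) differentiable (at x)"
    by (intro differentiable_mult C2_onD[OF C2_on_metric x] differentiable_ds_up[OF x])
  show ?thesis unfolding chr_shift_eq
    by (simp only: pd_diff[OF differentiable_add[OF d1 d1] d2] pd_add[OF d1 d1]
        pd_cmult[OF C2_onD_pd[OF C2_on_s x]] pd_mult[OF C2_onD[OF C2_on_metric x] differentiable_ds_up[OF x]])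
       simp
qed

lemma chr_shift_trace: "y \<in> U \<Longrightarrow> (\<Sum>k\<in>UNIV. chr_shift k i k y) = real CARD('n) * pd i s y"
proof -
  assume y: "y \<in> U"
  have "(\<Sum>k\<in>UNIV. g y $ i $ k * ds_up k y) = (\<Sum>l\<in>UNIV. (\<Sum>k\<in>UNIV. g y $ i $ k * ginv g y $ k $ l) * pd l s y)"
    by (simp add: sum_distrib_left sum_distrib_right mult.assoc) (rule sum.swap)
  also have "\<dots> = pd i s y" by (simp add: metric_ginv[OF y])
  finally have lower: "(\<Sum>k\<in>UNIV. g y $ i $ k * ds_up k y) = pd i s y" .
  have "(\<Sum>k\<in>UNIV. chr_shift k i k y)
      = (\<Sum>k\<in>UNIV. (if k = i then pd k s y else 0) + pd i s y - g y $ i $ k * ds_up k y)"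
    by (rule sum.cong) (auto simp: chr_shift_def)
  also have "\<dots> = pd i s y + real CARD('n) * pd i s y - pd i s y"
    by (simp add: sum.distrib sum_subtractf lower)
  finally show ?thesis by simp
qed

lemma pd_chr_shift_trace: "x \<in> U \<Longrightarrow> (\<Sum>k\<in>UNIV. pd j (chr_shift k i k) x) = real CARD('n) * pd j (pd i s) x"
proof -
  assume x: "x \<in> U"
  have "(\<Sum>k\<in>UNIV. pd j (chr_shift k i k) x) = pd j (\<lambda>y. \<Sum>k\<in>UNIV. chr_shift k i k y) x"
    by (rule pd_sum[symmetric]) (auto intro: differentiable_chr_shift[OF x])
  also have "\<dots> = pd j (\<lambda>y. real CARD('n) * pd i s y) x"
    by (rule pd_cong_open[OF open_U x])
       (auto simp: chr_shift_trace intro!: differentiable_sum differentiable_chr_shift[OF x])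
  also have "\<dots> = real CARD('n) * pd j (pd i s) x" by (rule pd_cmult[OF C2_onD_pd[OF C2_on_s x]])
  finally show ?thesis .
qed

lemma pd_ds_up: "x \<in> U \<Longrightarrow> pd a (ds_up k) x
    = (\<Sum>l\<in>UNIV. ginv g x $ k $ l * pd a (pd l s) x) + (\<Sum>l\<in>UNIV. pd a (\<lambda>y. ginv g y $ k $ l) x * pd l s x)"
proof -
  assume x: "x \<in> U"
  have "pd a (ds_up k) x = (\<Sum>l\<in>UNIV. pd a (\<lambda>y. ginv g y $ k $ l * pd l s y) x)"
    by (rule pd_sum) (auto intro!: differentiable_mult differentiable_ginv[OF x] C2_onD_pd[OF C2_on_s x])
  also have "\<dots> = (\<Sum>l\<in>UNIV. ginv g x $ k $ l * pd a (pd l s) x + pd a (\<lambda>y. ginv g y $ k $ l) x * pd l s x)"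
    by (rule sum.cong[OF refl], rule pd_mult[OF differentiable_ginv[OF x] C2_onD_pd[OF C2_on_s x]])
  finally show ?thesis by (simp add: sum.distrib)
qed

lemma div_ds_up: "x \<in> U \<Longrightarrow> (\<Sum>k\<in>UNIV. pd k (ds_up k) x)
   = (\<Sum>i\<in>UNIV. \<Sum>j\<in>UNIV. ginv g x $ i $ j * pd i (pd j s) x)
     - (\<Sum>i\<in>UNIV. \<Sum>j\<in>UNIV. \<Sum>l\<in>UNIV. ginv g x $ i $ j * ds_up l x * dg i j l x)"
proof -
  assume x: "x \<in> U"
  have "(\<Sum>k\<in>UNIV. \<Sum>l\<in>UNIV. pd k (\<lambda>y. ginv g y $ k $ l) x * pd l s x)
      = - (\<Sum>k\<in>UNIV. \<Sum>l\<in>UNIV. \<Sum>p\<in>UNIV. \<Sum>q\<in>UNIV. ginv g x $ k $ p * dg k p q x * ginv g x $ q $ l * pd l s x)"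
    by (simp add: pd_ginv[OF x] sum_distrib_right sum_negf)
  also have "\<dots> = - (\<Sum>k\<in>UNIV. \<Sum>p\<in>UNIV. \<Sum>q\<in>UNIV. \<Sum>l\<in>UNIV. ginv g x $ k $ p * dg k p q x * ginv g x $ q $ l * pd l s x)"
    by (rule arg_cong[where f=uminus], rule sum.cong[OF refl], rule sum3_outermost_in)
  also have "\<dots> = - (\<Sum>i\<in>UNIV. \<Sum>j\<in>UNIV. \<Sum>l\<in>UNIV. ginv g x $ i $ j * ds_up l x * dg i j l x)"
    by (simp add: sum_distrib_left mult_ac)
  finally show ?thesis by (simp add: pd_ds_up[OF x] sum.distrib)
qed

abbreviation Ga where "Ga k i j x \<equiv> christoffel g k i j x"

lemma ricci_ghat: "x \<in> U \<Longrightarrow> ricci ghat i j x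
   = ricci g i j x + (\<Sum>k\<in>UNIV. pd k (chr_shift k i j) x) - real CARD('n) * pd j (pd i s) x
     + ((\<Sum>k\<in>UNIV. \<Sum>l\<in>UNIV. (Ga k k l x + chr_shift k k l x) * (Ga l i j x + chr_shift l i j x)
           - (Ga k j l x + chr_shift k j l x) * (Ga l i k x + chr_shift l i k x))
        - (\<Sum>k\<in>UNIV. \<Sum>l\<in>UNIV. Ga k k l x * Ga l i j x - Ga k j l x * Ga l i k x))"
proof -
  assume x: "x \<in> U"
  have "ricci ghat i j x = (\<Sum>k\<in>UNIV. pd k (christoffel g k i j) x + pd k (chr_shift k i j) x
      - (pd j (christoffel g k i k) x + pd j (chr_shift k i k) x)
      + (\<Sum>l\<in>UNIV. (Ga k k l x + chr_shift k k l x) * (Ga l i j x + chr_shift l i j x)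
           - (Ga k j l x + chr_shift k j l x) * (Ga l i k x + chr_shift l i k x)))"
    unfolding ricci_def by (simp only: christoffel_ghat[OF x] pd_christoffel_ghat[OF x])
  also have "\<dots> = ricci g i j x + (\<Sum>k\<in>UNIV. pd k (chr_shift k i j) x) - (\<Sum>k\<in>UNIV. pd j (chr_shift k i k) x)
      + ((\<Sum>k\<in>UNIV. \<Sum>l\<in>UNIV. (Ga k k l x + chr_shift k k l x) * (Ga l i j x + chr_shift l i j x)
            - (Ga k j l x + chr_shift k j l x) * (Ga l i k x + chr_shift l i k x))
         - (\<Sum>k\<in>UNIV. \<Sum>l\<in>UNIV. Ga k k l x * Ga l i j x - Ga k j l x * Ga l i k x))"
    unfolding ricci_def by (simp only: sum.distrib sum_subtractf)
  finally show ?thesis by (simp add: pd_chr_shift_trace[OF x])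
qed

context
  fixes x assumes x: "x \<in> U"
begin

interpretation A: christoffel_shift "\<lambda>i j. ginv g x $ i $ j" "\<lambda>i j. g x $ i $ j" "\<lambda>l. pd l s x"
  by unfold_locales (rule ginv_sym[OF x], rule metric_sym[OF x], rule ginv_metric[OF x])

lemma chr_shift_at: "chr_shift k i j x = A.shift k i j"
  by (simp add: chr_shift_def A.shift_def A.up_def)

lemma up_at: "A.up l = ds_up l x" by (simp add: A.up_def)

abbreviation "hess_tr \<equiv> (\<Sum>i\<in>UNIV. \<Sum>j\<in>UNIV. ginv g x $ i $ j * pd i (pd j s) x)"
abbreviation "dg_mixed \<equiv> (\<Sum>i\<in>UNIV. \<Sum>j\<in>UNIV. \<Sum>l\<in>UNIV. ginv g x $ i $ j * ds_up l x * dg i j l x)"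
abbreviation "dg_trace \<equiv> (\<Sum>i\<in>UNIV. \<Sum>j\<in>UNIV. \<Sum>l\<in>UNIV. ginv g x $ i $ j * ds_up l x * dg l i j x)"

lemma hess_tr_sym: "(\<Sum>i\<in>UNIV. \<Sum>j\<in>UNIV. ginv g x $ i $ j * pd j (pd i s) x) = hess_tr"
  by (rule trans[OF sum.swap]) (simp add: ginv_sym[OF x])

lemma contr_div_chr_shift: "(\<Sum>i\<in>UNIV. \<Sum>j\<in>UNIV. ginv g x $ i $ j * (\<Sum>k\<in>UNIV. pd k (chr_shift k i j) x))
    = 2 * hess_tr - dg_trace - real CARD('n) * (hess_tr - dg_mixed)"
proof -
  have expand: "(\<Sum>k\<in>UNIV. pd k (chr_shift k i j) x) = pd i (pd j s) x + pd j (pd i s) x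
       - (\<Sum>k\<in>UNIV. dg k i j x * ds_up k x) - g x $ i $ j * (\<Sum>k\<in>UNIV. pd k (ds_up k) x)" for i j
    by (simp add: pd_chr_shift[OF x] sum.distrib sum_subtractf sum_distrib_left)
  have dg_trace_eq: "(\<Sum>i\<in>UNIV. \<Sum>j\<in>UNIV. ginv g x $ i $ j * (\<Sum>k\<in>UNIV. dg k i j x * ds_up k x)) = dg_trace"
    by (simp add: sum_distrib_left mult_ac)
  have "(\<Sum>i\<in>UNIV. \<Sum>j\<in>UNIV. ginv g x $ i $ j * (\<Sum>k\<in>UNIV. pd k (chr_shift k i j) x))
      = hess_tr + (\<Sum>i\<in>UNIV. \<Sum>j\<in>UNIV. ginv g x $ i $ j * pd j (pd i s) x)
        - (\<Sum>i\<in>UNIV. \<Sum>j\<in>UNIV. ginv g x $ i $ j * (\<Sum>k\<in>UNIV. dg k i j x * ds_up k x))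
        - (\<Sum>i\<in>UNIV. \<Sum>j\<in>UNIV. ginv g x $ i $ j * g x $ i $ j) * (\<Sum>k\<in>UNIV. pd k (ds_up k) x)"
    unfolding expand by (simp add: algebra_simps sum.distrib sum_subtractf sum_distrib_right)
  also have "\<dots> = 2 * hess_tr - dg_trace - real CARD('n) * (hess_tr - dg_mixed)"
    unfolding hess_tr_sym dg_trace_eq trace_ginv_metric[OF x] div_ds_up[OF x] by simp
  finally show ?thesis .
qed

lemma christoffel_ctr_up: "(\<Sum>l\<in>UNIV. A.ctr (\<lambda>k i j. Ga k i j x) l * A.up l) = dg_trace / 2"
proof -
  define H where "H = (\<lambda>l. ds_up l x)"
  have H: "\<And>l. A.up l = H l" "\<And>l. ds_up l x = H l" by (simp_all add: H_def up_at)
  have "(\<Sum>l\<in>UNIV. A.ctr (\<lambda>k i j. Ga k i j x) l * A.up l)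
     = (1/2) * (\<Sum>l\<in>UNIV. \<Sum>k\<in>UNIV. \<Sum>a\<in>UNIV. ginv g x $ k $ a * H l * dg l k a x)"
    unfolding A.ctr_def H christoffel_trace[OF x]
    by (simp add: sum_distrib_right sum_distrib_left mult_ac)
  also have "\<dots> = (1/2) * (\<Sum>k\<in>UNIV. \<Sum>a\<in>UNIV. \<Sum>l\<in>UNIV. ginv g x $ k $ a * H l * dg l k a x)"
    by (subst sum3_outermost_in) simp
  also have "\<dots> = dg_trace / 2" unfolding H by simp
  finally show ?thesis .
qed

lemma christoffel_gtr_ds: "(\<Sum>l\<in>UNIV. pd l s x * A.gtr (\<lambda>k i j. Ga k i j x) l) = dg_mixed - dg_trace / 2"
proof -
  define H where "H = (\<lambda>l. ds_up l x)"
  have H: "\<And>l. ds_up l x = H l" by (simp add: H_def)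
  have H_sym: "\<And>a. (\<Sum>l\<in>UNIV. ginv g x $ l $ a * pd l s x) = H a" by (simp add: H_def ginv_sym[OF x])
  have "(\<Sum>l\<in>UNIV. pd l s x * A.gtr (\<lambda>k i j. Ga k i j x) l)
     = (1/2) * (\<Sum>l\<in>UNIV. \<Sum>i\<in>UNIV. \<Sum>j\<in>UNIV. \<Sum>a\<in>UNIV. ginv g x $ i $ j * (ginv g x $ l $ a * pd l s x)
          * (dg i j a x + dg j i a x - dg a i j x))"
    by (simp add: A.gtr_def christoffel_def sum_distrib_left sum_distrib_right mult_ac)
  also have "\<dots> = (1/2) * (\<Sum>i\<in>UNIV. \<Sum>j\<in>UNIV. \<Sum>a\<in>UNIV. \<Sum>l\<in>UNIV. ginv g x $ i $ j * (ginv g x $ l $ a * pd l s x)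
          * (dg i j a x + dg j i a x - dg a i j x))"
    by (subst sum4_outermost_in) simp
  also have "\<dots> = (1/2) * (\<Sum>i\<in>UNIV. \<Sum>j\<in>UNIV. \<Sum>a\<in>UNIV. ginv g x $ i $ j * H a
          * (dg i j a x + dg j i a x - dg a i j x))"
    unfolding H_sym[symmetric] by (simp add: sum_distrib_left sum_distrib_right mult_ac)
  also have "\<dots> = (dg_mixed + (\<Sum>i\<in>UNIV. \<Sum>j\<in>UNIV. \<Sum>a\<in>UNIV. ginv g x $ i $ j * ds_up a x * dg j i a x)
      - dg_trace) / 2"
    unfolding H by (simp add: algebra_simps sum.distrib sum_subtractf)
  also have "(\<Sum>i\<in>UNIV. \<Sum>j\<in>UNIV. \<Sum>a\<in>UNIV. ginv g x $ i $ j * ds_up a x * dg j i a x) = dg_mixed"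
    by (rule trans[OF sum.swap]) (simp add: ginv_sym[OF x])
  finally show ?thesis by (simp add: field_simps)
qed

lemma lap_s_coordinates: "lap g s x = hess_tr - (dg_mixed - dg_trace / 2)"
proof -
  have "lap g s x = hess_tr - (\<Sum>i\<in>UNIV. \<Sum>j\<in>UNIV. \<Sum>k\<in>UNIV. ginv g x $ i $ j * Ga k i j x * pd k s x)"
    by (simp add: lap_def algebra_simps sum_subtractf sum_distrib_left)
  also have "(\<Sum>i\<in>UNIV. \<Sum>j\<in>UNIV. \<Sum>k\<in>UNIV. ginv g x $ i $ j * Ga k i j x * pd k s x)
      = (\<Sum>l\<in>UNIV. pd l s x * A.gtr (\<lambda>k i j. Ga k i j x) l)"
    by (rule trans[OF sum3_innermost_out]) (simp add: A.gtr_def sum_distrib_left mult_ac)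
  finally show ?thesis by (simp add: christoffel_gtr_ds)
qed

lemma ds_up_ds: "(\<Sum>l\<in>UNIV. pd l s x * A.up l) = ginner g s s x"
  by (simp add: ginner_def up_at sum_distrib_left mult_ac)

lemma scal_ghat: "scal ghat x = exp (-2 * s x) * (scal g x - 2 * (real CARD('n) - 1) * lap g s x
    - (real CARD('n) - 1) * (real CARD('n) - 2) * ginner g s s x)"
proof -
  let ?n = "real CARD('n)" and ?B = "\<lambda>i j. ginv g x $ i $ j" and ?Gm = "\<lambda>k i j. Ga k i j x"
  define Q1 where "Q1 i j = (\<Sum>k\<in>UNIV. \<Sum>l\<in>UNIV. (?Gm k k l + A.shift k k l) * (?Gm l i j + A.shift l i j)
      - (?Gm k j l + A.shift k j l) * (?Gm l i k + A.shift l i k))" for i j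
  define Q0 where "Q0 i j = (\<Sum>k\<in>UNIV. \<Sum>l\<in>UNIV. ?Gm k k l * ?Gm l i j - ?Gm k j l * ?Gm l i k)" for i j
  define L where "L i j = (\<Sum>k\<in>UNIV. pd k (chr_shift k i j) x)" for i j
  have "ricci ghat i j x = ricci g i j x + L i j - ?n * pd j (pd i s) x + (Q1 i j - Q0 i j)" for i j
    unfolding ricci_ghat[OF x] Q1_def Q0_def L_def chr_shift_at ..
  then have traced: "(\<Sum>i\<in>UNIV. \<Sum>j\<in>UNIV. ?B i j * ricci ghat i j x)
      = scal g x + (\<Sum>i\<in>UNIV. \<Sum>j\<in>UNIV. ?B i j * L i j) - ?n * (\<Sum>i\<in>UNIV. \<Sum>j\<in>UNIV. ?B i j * pd j (pd i s) x)
        + ((\<Sum>i\<in>UNIV. \<Sum>j\<in>UNIV. ?B i j * Q1 i j) - (\<Sum>i\<in>UNIV. \<Sum>j\<in>UNIV. ?B i j * Q0 i j))"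
    unfolding scal_def
    by (simp only: distrib_left right_diff_distrib sum.distrib sum_subtractf sum_distrib_left
        mult.left_commute[of "?n"])
  have quadratic: "(\<Sum>i\<in>UNIV. \<Sum>j\<in>UNIV. ?B i j * Q1 i j) = (\<Sum>i\<in>UNIV. \<Sum>j\<in>UNIV. ?B i j * Q0 i j)
         + (2 - ?n) * (\<Sum>l\<in>UNIV. A.ctr ?Gm l * A.up l)
         + (?n - 2) * (\<Sum>l\<in>UNIV. pd l s x * A.gtr ?Gm l)
         - (?n - 1) * (?n - 2) * (\<Sum>l\<in>UNIV. pd l s x * A.up l)"
    unfolding Q1_def Q0_def by (rule A.contr_ricci_quadratic_shift) (rule christoffel_sym[OF x])
  have "(\<Sum>i\<in>UNIV. \<Sum>j\<in>UNIV. ?B i j * ricci ghat i j x)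
     = scal g x - 2 * (?n - 1) * lap g s x - (?n - 1) * (?n - 2) * ginner g s s x"
    unfolding traced quadratic L_def contr_div_chr_shift hess_tr_sym christoffel_ctr_up christoffel_gtr_ds
      ds_up_ds lap_s_coordinates
    by (simp add: field_simps)
  moreover have "scal ghat x = exp (-2 * s x) * (\<Sum>i\<in>UNIV. \<Sum>j\<in>UNIV. ?B i j * ricci ghat i j x)"
    unfolding scal_def by (simp add: ginv_ghat_nth[OF x] sum_distrib_left mult.assoc)
  ultimately show ?thesis by simp
qed

end

lemma gdot_ghat: "gdot ghat y a b = exp (2 * s y) * gdot g y a b"
  by (simp add: gdot_def scaleR_matrix_vector_assoc[symmetric])

lemma grad_ghat: "y \<in> U \<Longrightarrow> grad ghat f y = exp (-2 * s y) *\<^sub>R grad g f y"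
  by (simp add: grad_def ginv_ghat scaleR_matrix_vector_assoc)

lemma gdot_grad_grad_ghat: "x \<in> U \<Longrightarrow> gdot ghat x (grad ghat a x) (grad ghat b x) = exp (-2 * s x) * ginner g a b x"
proof -
  assume x: "x \<in> U"
  have "gdot ghat x (grad ghat a x) (grad ghat b x)
      = exp (2 * s x) * (exp (-2 * s x) * (exp (-2 * s x) * ginner g a b x))"
    by (simp add: gdot_ghat grad_ghat[OF x] gdot_scaleR_right gdot_scaleR_left gdot_grad_grad[OF x])
  also have "\<dots> = (exp (2 * s x) * exp (-2 * s x)) * exp (-2 * s x) * ginner g a b x"
    by (simp add: mult_ac)
  also have "exp (2 * s x) * exp (-2 * s x) = 1" by (simp add: mult_exp_exp)
  finally show ?thesis by simp
qed

lemma C2_on_exp_s: "C2_on U (\<lambda>y. exp (c * s y))"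
  by (rule C2_on_exp[OF C2_on_cmult[OF C2_on_s]])

lemma lap_exp_s: "x \<in> U \<Longrightarrow> lap g (\<lambda>y. exp (s y)) x = exp (s x) * (lap g s x + ginner g s s x)"
  using lap_exp_scaled[OF C2_on_s, of x 1] by simp

lemma ginner_exp_s_right: "x \<in> U \<Longrightarrow> ginner g h (\<lambda>y. exp (s y)) x = exp (s x) * ginner g h s x"
  using ginner_exp_scaled_right[OF C2_on_s, of x h 1] by simp

lemma ginner_exp_s_left: "x \<in> U \<Longrightarrow> ginner g (\<lambda>y. exp (s y)) h x = exp (s x) * ginner g s h x"
  using ginner_exp_scaled_left[OF C2_on_s, of x 1 h] by simp

lemma JW_ghat:
  assumes v: "C2_on U v" and v_pos: "v x > 0" and m_ne: "m + real CARD('n) - 1 \<noteq> 0" and x: "x \<in> U"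
  shows "JW ghat m mu (\<lambda>y. exp (s y) * v y) x = exp (-2 * s x) * (JW g m mu v x - lap g s x
      - m * ginner g s v x / v x - (m + real CARD('n) - 2) / 2 * ginner g s s x)"
proof -
  define e where "e = exp (s x)"
  define D where "D = 2 * (m + real CARD('n) - 1)"
  have e_pos: "e > 0" by (simp add: e_def)
  have D_ne: "D \<noteq> 0" using m_ne by (simp add: D_def)
  have "exp (s x) * exp (s x) * exp (-2 * s x) = 1" by (simp add: mult_exp_exp)
  then have exps: "exp (-2 * s x) = 1 / (e * e)" "exp (s x) = e"
    using e_pos by (simp_all add: e_def field_simps)
  have exp_s: "C2_on U (\<lambda>y. exp (s y))" using C2_on_exp_s[of 1] by simp
  show ?thesis
    unfolding JW_def Rmphi_def D_def[symmetric]
    apply (simp only: gdot_grad_grad_ghat[OF x] lap_ghat[OF x] scal_ghat[OF x] gdot_grad_grad[OF x])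
    apply (simp only: lap_mult[OF exp_s v x] lap_exp_s[OF x] ginner_mult_right[OF exp_s v x]
        ginner_mult_left[OF exp_s v x] ginner_exp_s_right[OF x] ginner_exp_s_left[OF x])
    apply (simp only: ginner_sym[OF x, of v s] exps)
    using e_pos v_pos D_ne by (simp add: field_simps power2_eq_square) (simp add: D_def algebra_simps)
qed

lemma tDW_ghat:
  assumes u: "C2_on U u" and v: "C2_on U v" and v_pos: "v x > 0"
    and m_ne: "m + real CARD('n) - 1 \<noteq> 0" and x: "x \<in> U"
  shows "tDW ghat m mu (\<lambda>y. exp (s y) * v y) w (\<lambda>y. exp (w * s y) * u y) x
    = tractor_rescale g (w - 1) s x (tDW g m mu v w u x)"
proof -
  define e where "e = exp (s x)"
  define E where "E = exp (w * s x)"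
  have e_pos: "e > 0" and E_pos: "E > 0" by (simp_all add: e_def E_def)
  have exp_w1: "exp ((w - 1) * s x) = E / e"
    unfolding e_def E_def by (simp add: exp_diff[symmetric] algebra_simps)
  have "exp (s x) * exp (s x) * exp (-2 * s x) = 1" by (simp add: mult_exp_exp)
  then have exps: "exp (- s x) = 1 / e" "exp (-2 * s x) = 1 / (e * e)" "exp (s x) = e" "exp (w * s x) = E"
    using e_pos by (simp_all add: e_def E_def exp_minus field_simps)
  have exp_s: "C2_on U (\<lambda>y. exp (s y))" using C2_on_exp_s[of 1] by simp
  note exp_ws = C2_on_exp_s[of w]
  have top: "w * (m + real CARD('n) + 2 * w - 2) * (exp (w * s x) * u x) =
     exp ((w - 1) * s x) *\<^sub>R (exp (s x) * (w * (m + real CARD('n) + 2 * w - 2) * u x))"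
    unfolding exp_w1 exps using e_pos by (simp add: field_simps)
  have middle: "(m + real CARD('n) + 2 * w - 2) *\<^sub>R grad ghat (\<lambda>y. exp (w * s y) * u y) x =
     exp ((w - 1) * s x) *\<^sub>R exp (- s x) *\<^sub>R
     ((m + real CARD('n) + 2 * w - 2) *\<^sub>R grad g u x + (w * (m + real CARD('n) + 2 * w - 2) * u x) *\<^sub>R grad g s x)"
    unfolding grad_ghat[OF x] grad_mult[OF exp_ws u x] grad_exp_scaled[OF C2_on_s x] exp_w1 exps
    using e_pos by (simp add: vec_eq_iff field_simps)
  have bottom: "- (wlap ghat m (\<lambda>y. exp (s y) * v y) (\<lambda>y. exp (w * s y) * u y) x
        + w * JW ghat m mu (\<lambda>y. exp (s y) * v y) x * (exp (w * s x) * u x))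
     = exp ((w - 1) * s x) *\<^sub>R (exp (- s x) *
      (- (wlap g m v u x + w * JW g m mu v x * u x)
       - gdot g x (grad g s x) ((m + real CARD('n) + 2 * w - 2) *\<^sub>R grad g u x)
       - 1 / 2 * gdot g x (grad g s x) (grad g s x) * (w * (m + real CARD('n) + 2 * w - 2) * u x)))"
    unfolding wlap_def JW_ghat[OF v v_pos m_ne x]
    apply (simp only: gdot_grad_grad_ghat[OF x] lap_ghat[OF x] gdot_scaleR_right gdot_grad_grad[OF x]
        real_scaleR_def)
    apply (simp only: lap_mult[OF exp_ws u x] lap_exp_scaled[OF C2_on_s x]
        ginner_mult_right[OF exp_ws u x] ginner_mult_left[OF exp_s v x] ginner_mult_left[OF exp_ws u x]
        ginner_exp_scaled_right[OF C2_on_s x] ginner_exp_scaled_left[OF C2_on_s x]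
        ginner_exp_s_right[OF x] ginner_exp_s_left[OF x])
    apply (simp only: ginner_sym[OF x, of u s] ginner_sym[OF x, of v s] ginner_sym[OF x, of u v] exp_w1 exps)
    using e_pos v_pos by (simp add: field_simps power2_eq_square)
  show ?thesis
    unfolding tDW_def tractor_rescale_def Let_def
    by (simp only: prod.case scaleR_Pair prod.inject) (intro conjI top middle bottom)
qed

end

theorem lemma5p9:
  fixes U :: "(real ^ 'n::finite) set"
    and g :: "real ^ 'n \<Rightarrow> real ^ 'n ^ 'n"
    and v u :: "real ^ 'n \<Rightarrow> real"
    and m mu w :: real
  assumes "open U"
    and "CARD('n) \<ge> 3"
    and "m \<noteq> - real CARD('n)" and "m \<noteq> 1 - real CARD('n)" and "m \<noteq> 2 - real CARD('n)"
    and "riem_metric_on U g"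
    and "smooth_on U v" and "\<forall>x\<in>U. v x > 0"
    and "smooth_on U u"
  shows
    "(\<forall>x\<in>U.
        (real CARD('n) + 2*w - 2) *\<^sub>R tDW g m mu v w u x
          - (m + real CARD('n) + 2*w - 2) *\<^sub>R tD g w u x
        = (- m / v x * tmetric g x (tD g w u x)
              (tJ g v x + ((mu - (m - 1) * tmetric g x (tJ g v x) (tJ g v x))
                             / (2 * (m + real CARD('n) - 1) * v x)) *\<^sub>R tX)) *\<^sub>R tX)
     \<and> (\<forall>s. smooth_on U s \<longrightarrow>
          (\<forall>x\<in>U. tDW (\<lambda>y. exp (2 * s y) *\<^sub>R g y) m mu (\<lambda>y. exp (s y) * v y) w
                      (\<lambda>y. exp (w * s y) * u y) x
                  = tractor_rescale g (w - 1) s x (tDW g m mu v w u x)))"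
proof -
  interpret riem_chart U g using assms(1,6) by unfold_locales
  have m_ne: "m + real CARD('n) - 1 \<noteq> 0" using assms(4) by linarith
  show ?thesis
  proof (intro conjI ballI allI impI)
    fix x assume "x \<in> U"
    then show "(real CARD('n) + 2*w - 2) *\<^sub>R tDW g m mu v w u x
          - (m + real CARD('n) + 2*w - 2) *\<^sub>R tD g w u x
        = (- m / v x * tmetric g x (tD g w u x)
              (tJ g v x + ((mu - (m - 1) * tmetric g x (tJ g v x) (tJ g v x))
                             / (2 * (m + real CARD('n) - 1) * v x)) *\<^sub>R tX)) *\<^sub>R tX"
      using tDW_minus_tD m_ne assms(2,8) by blast
  next
    fix s x assume "smooth_on U s" "x \<in> U"
    then interpret conformal_change U g s by unfold_locales (rule smooth_on_imp_C2_on)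
    show "tDW (\<lambda>y. exp (2 * s y) *\<^sub>R g y) m mu (\<lambda>y. exp (s y) * v y) w (\<lambda>y. exp (w * s y) * u y) x
        = tractor_rescale g (w - 1) s x (tDW g m mu v w u x)"
      using tDW_ghat assms(7,8,9) smooth_on_imp_C2_on m_ne \<open>x \<in> U\<close> by blast
  qed
qed

end
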